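(* There exists an integer $g_0$ with the following property. Let $g\ge g_0$ and let $\mathfrak g$ be a semisimple complex Lie algebra with inclusions $\mathfrak{sp}(2g-10)\subset\mathfrak g\subset\mathfrak{sp}(4g-4)$ such that the composite inclusion $\mathfrak{sp}(2g-10)\subset\mathfrak{sp}(4g-4)$ is the linear embedding given by the diagonal action on the direct sum of two copies of the standard representation of $\mathfrak{sp}(2g-10)$ (plus a trivial complement). Suppose that the action of $\mathfrak g$ on $\mathbb C^{4g-4}$ is irreducible, and that $\mathfrak g$ contains an element $A$ which acts on $\mathbb C^{4g-4}$ as a nilpotent endomorphism with exactly one nontrivial Jordan block, that block having size $2$ (i.e. $A$ is nilpotent of rank one). Then $\mathfrak g=\mathfrak{sp}(4g-4)$. *)

theory Defs
  imports Complex_Main "Jordan_Normal_Form.Matrix" "Jordan_Normal_Form.DL_Rank"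
begin

definition lie_bracket :: "complex mat \<Rightarrow> complex mat \<Rightarrow> complex mat" where
  "lie_bracket X Y = X * Y - Y * X"

definition mat_subspace :: "nat \<Rightarrow> complex mat set \<Rightarrow> bool" where
  "mat_subspace n S \<longleftrightarrow> S \<subseteq> carrier_mat n n \<and> 0\<^sub>m n n \<in> S \<and>
     (\<forall>X\<in>S. \<forall>Y\<in>S. X + Y \<in> S) \<and> (\<forall>c. \<forall>X\<in>S. c \<cdot>\<^sub>m X \<in> S)"

definition lie_subalgebra :: "nat \<Rightarrow> complex mat set \<Rightarrow> bool" where
  "lie_subalgebra n L \<longleftrightarrow> mat_subspace n L \<and> (\<forall>X\<in>L. \<forall>Y\<in>L. lie_bracket X Y \<in> L)"

definition lie_ideal :: "nat \<Rightarrow> complex mat set \<Rightarrow> complex mat set \<Rightarrow> bool" where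
  "lie_ideal n I L \<longleftrightarrow> mat_subspace n I \<and> I \<subseteq> L \<and> (\<forall>X\<in>L. \<forall>Y\<in>I. lie_bracket X Y \<in> I)"

inductive_set mat_span :: "nat \<Rightarrow> complex mat set \<Rightarrow> complex mat set" for n S where
  zero: "0\<^sub>m n n \<in> mat_span n S"
| base: "X \<in> S \<Longrightarrow> X \<in> mat_span n S"
| add: "X \<in> mat_span n S \<Longrightarrow> Y \<in> mat_span n S \<Longrightarrow> X + Y \<in> mat_span n S"
| smult: "X \<in> mat_span n S \<Longrightarrow> c \<cdot>\<^sub>m X \<in> mat_span n S"

fun derived :: "nat \<Rightarrow> nat \<Rightarrow> complex mat set \<Rightarrow> complex mat set" where
  "derived n 0 I = I"
| "derived n (Suc k) I =
     mat_span n {lie_bracket X Y | X Y. X \<in> derived n k I \<and> Y \<in> derived n k I}"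

definition solvable_lie :: "nat \<Rightarrow> complex mat set \<Rightarrow> bool" where
  "solvable_lie n I \<longleftrightarrow> (\<exists>k. derived n k I \<subseteq> {0\<^sub>m n n})"

definition semisimple_lie :: "nat \<Rightarrow> complex mat set \<Rightarrow> bool" where
  "semisimple_lie n L \<longleftrightarrow> lie_subalgebra n L \<and> L \<noteq> {0\<^sub>m n n} \<and>
     (\<forall>I. lie_ideal n I L \<and> solvable_lie n I \<longrightarrow> I = {0\<^sub>m n n})"

text \<open>Standard symplectic form J = [[0, I_N], [-I_N, 0]] on C^(2N), and sp(2N).\<close>
definition sympl_J :: "nat \<Rightarrow> complex mat" where
  "sympl_J N = mat (2*N) (2*N) (\<lambda>(i,j).
      if i < N \<and> j = i + N then 1 else if N \<le> i \<and> j + N = i then -1 else 0)"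

definition sp :: "nat \<Rightarrow> complex mat set" where
  "sp N = {X \<in> carrier_mat (2*N) (2*N).
            transpose_mat X * sympl_J N + sympl_J N * X = 0\<^sub>m (2*N) (2*N)}"

text \<open>Position of big index i (in C^(2N), basis e_1..e_N,f_1..f_N) inside one of two
  copies (0 or 1) of C^(2m) (basis e_1..e_m,f_1..f_m); None = trivial complement.
  Copy c uses e_(cm+1..cm+m), f_(cm+1..cm+m).\<close>
definition emb_pos :: "nat \<Rightarrow> nat \<Rightarrow> nat \<Rightarrow> (nat \<times> nat) option" where
  "emb_pos m N i =
     (if i < N then (if i < 2*m then Some (i div m, i mod m) else None)
      else (if i - N < 2*m then Some ((i - N) div m, m + (i - N) mod m) else None))"

text \<open>The embedding sp(2m) -> sp(2N): diagonal action on two copies of the standard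
  representation plus a trivial complement (requires 2m \<le> N).\<close>
definition diag_emb :: "nat \<Rightarrow> nat \<Rightarrow> complex mat \<Rightarrow> complex mat" where
  "diag_emb m N X = mat (2*N) (2*N) (\<lambda>(i,j).
      (case (emb_pos m N i, emb_pos m N j) of
         (Some (c, k), Some (d, l)) \<Rightarrow> if c = d then X $$ (k, l) else 0
       | _ \<Rightarrow> 0))"

definition vec_subspace :: "nat \<Rightarrow> complex vec set \<Rightarrow> bool" where
  "vec_subspace n W \<longleftrightarrow> W \<subseteq> carrier_vec n \<and> 0\<^sub>v n \<in> W \<and>
     (\<forall>v\<in>W. \<forall>w\<in>W. v + w \<in> W) \<and> (\<forall>c. \<forall>v\<in>W. c \<cdot>\<^sub>v v \<in> W)"

definition irreducible_action :: "nat \<Rightarrow> complex mat set \<Rightarrow> bool" where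
  "irreducible_action n L \<longleftrightarrow> n > 0 \<and>
     (\<forall>W. vec_subspace n W \<and> (\<forall>A\<in>L. \<forall>w\<in>W. A *\<^sub>v w \<in> W) \<longrightarrow>
          W = {0\<^sub>v n} \<or> W = carrier_vec n)"

definition nilpotent_mat :: "nat \<Rightarrow> complex mat \<Rightarrow> bool" where
  "nilpotent_mat n A \<longleftrightarrow> A \<in> carrier_mat n n \<and> (\<exists>k. A ^\<^sub>m k = 0\<^sub>m n n)"

end

theory Submission
  imports Defs
begin

text \<open>Identify \<open>sp(2N)\<close> with the symmetric square of \<open>V = \<complex>\<^sup>2\<^sup>N\<close>: the product \<open>x\<cdot>y\<close>
  (\<open>sym_prod N x y\<close>) acts by \<open>z \<mapsto> \<omega>(y,z) x + \<omega>(x,z) y\<close>, where \<open>\<omega> = symp_form N\<close>, and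
  the rank-one elements of \<open>sp(2N)\<close> are the maps \<open>A\<^sub>u = \<omega>(u,-) u = (u\<cdot>u)/2\<close> (\<open>sym_sq N u\<close>). Let \<open>A\<^sub>u \<in> L\<close>. If \<open>\<omega>(u, Xu) \<noteq> 0\<close> for some \<open>X \<in> L\<close>, brackets
  with \<open>X\<close> give \<open>A\<^bsub>Xu\<^esub> \<in> L\<close>, hence \<open>u, v\<close> with \<open>\<omega>(u,v) = 1\<close> and \<open>A\<^sub>u, A\<^sub>v \<in> L\<close>. Then
  \<open>{x. u\<cdot>x \<in> L}\<close> and \<open>{y. x\<cdot>y \<in> L for all x}\<close> are nonzero \<open>L\<close>-invariant subspaces,
  hence all of \<open>V\<close>, and the products \<open>x\<cdot>y\<close> span \<open>sp(2N)\<close>. Otherwise, expanding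
  \<open>ad\<^sub>X\<^sup>2\<^sup>n(A\<^sub>u)\<close> shows \<open>\<omega>(u, X\<^sup>n u) = 0\<close> for all \<open>X \<in> L\<close>, and polarization gives
  \<open>\<omega>(u, X\<^sub>1\<cdots>X\<^sub>n u) = 0\<close> for all \<open>X\<^sub>i \<in> L\<close>. So \<open>\<omega>(u,-)\<close> vanishes on the
  \<open>L\<close>-module generated by \<open>u\<close>, which is \<open>V\<close> by irreducibility, contradicting \<open>u \<noteq> 0\<close>.\<close>

lemma eq_mat_by_mult_vec:
  fixes A B :: "'a :: comm_ring_1 mat"
  assumes "A \<in> carrier_mat n n" "B \<in> carrier_mat n n"
    and "\<And>z. z \<in> carrier_vec n \<Longrightarrow> A *\<^sub>v z = B *\<^sub>v z"
  shows "A = B"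
proof (rule eq_matI)
  fix i j assume ij: "i < dim_row B" "j < dim_col B"
  then have "A $$ (i,j) = (A *\<^sub>v unit_vec n j) $ i" and "B $$ (i,j) = (B *\<^sub>v unit_vec n j) $ i"
    using assms(1,2) by auto
  then show "A $$ (i,j) = B $$ (i,j)"
    using assms(3)[of "unit_vec n j"] by simp
qed (use assms in auto)

lemma zero_smult_vec_carrier [simp]:
  "v \<in> carrier_vec n \<Longrightarrow> (0 :: 'a :: semiring_0) \<cdot>\<^sub>v v = 0\<^sub>v n"
  by (intro eq_vecI) auto

lemma smult_mat_mult_vec:
  fixes A :: "'a :: comm_ring_1 mat"
  shows "A \<in> carrier_mat n m \<Longrightarrow> v \<in> carrier_vec m \<Longrightarrow> (c \<cdot>\<^sub>m A) *\<^sub>v v = c \<cdot>\<^sub>v (A *\<^sub>v v)"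
  by (auto intro!: eq_vecI simp: scalar_prod_def sum_distrib_left algebra_simps)

lemma lie_bracket_carrier [simp]:
  "X \<in> carrier_mat n n \<Longrightarrow> Y \<in> carrier_mat n n \<Longrightarrow> lie_bracket X Y \<in> carrier_mat n n"
  unfolding lie_bracket_def by (metis minus_carrier_mat mult_carrier_mat)

lemma lie_bracket_mult_vec:
  assumes "X \<in> carrier_mat n n" "Y \<in> carrier_mat n n" "z \<in> carrier_vec n"
  shows "lie_bracket X Y *\<^sub>v z = X *\<^sub>v (Y *\<^sub>v z) - Y *\<^sub>v (X *\<^sub>v z)"
  unfolding lie_bracket_def using assms
  by (simp add: minus_mult_distrib_mat_vec[of _ n n] assoc_mult_mat_vec[of _ n n _ n])

definition word_act :: "'a :: semiring_0 mat list \<Rightarrow> 'a vec \<Rightarrow> 'a vec" where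
  "word_act P x = foldr (\<lambda>X v. X *\<^sub>v v) P x"

lemma word_act_simps [simp]:
  "word_act [] x = x"
  "word_act (X # P) x = X *\<^sub>v word_act P x"
  "word_act (P @ Q) x = word_act P (word_act Q x)"
  unfolding word_act_def by simp_all

lemma word_act_carrier:
  "set P \<subseteq> carrier_mat n n \<Longrightarrow> x \<in> carrier_vec n \<Longrightarrow> word_act P x \<in> carrier_vec n"
  by (induction P) auto

lemma word_act_zero:
  fixes P :: "'a :: semiring_0 mat list"
  shows "set P \<subseteq> carrier_mat n n \<Longrightarrow> word_act P (0\<^sub>v n) = 0\<^sub>v n"
  by (induction P) auto

lemma word_act_add:
  fixes P :: "'a :: comm_ring_1 mat list"
  shows "set P \<subseteq> carrier_mat n n \<Longrightarrow> x \<in> carrier_vec n \<Longrightarrow> y \<in> carrier_vec n \<Longrightarrow>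
    word_act P (x + y) = word_act P x + word_act P y"
  by (induction P) (auto simp: word_act_carrier mult_add_distrib_mat_vec)

lemma word_act_smult:
  fixes P :: "'a :: field mat list"
  shows "set P \<subseteq> carrier_mat n n \<Longrightarrow> x \<in> carrier_vec n \<Longrightarrow> word_act P (c \<cdot>\<^sub>v x) = c \<cdot>\<^sub>v word_act P x"
  by (induction P) (auto simp: word_act_carrier mult_mat_vec)

lemma word_act_swap:
  fixes X Y :: "complex mat"
  assumes "set A \<subseteq> carrier_mat n n" "set B \<subseteq> carrier_mat n n"
    and X: "X \<in> carrier_mat n n" and Y: "Y \<in> carrier_mat n n" and x: "x \<in> carrier_vec n"
  shows "word_act (A @ X # Y # B) x = word_act (A @ Y # X # B) x + word_act (A @ lie_bracket X Y # B) x"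
proof -
  define w where "w = word_act B x"
  have w: "w \<in> carrier_vec n" unfolding w_def using assms by (simp add: word_act_carrier)
  have "X *\<^sub>v (Y *\<^sub>v w) = Y *\<^sub>v (X *\<^sub>v w) + lie_bracket X Y *\<^sub>v w"
    using X Y w by (auto simp: lie_bracket_mult_vec intro!: eq_vecI)
  then have "word_act (A @ X # Y # B) x = word_act A (Y *\<^sub>v (X *\<^sub>v w) + lie_bracket X Y *\<^sub>v w)"
    by (simp add: w_def)
  also have "\<dots> = word_act A (Y *\<^sub>v (X *\<^sub>v w)) + word_act A (lie_bracket X Y *\<^sub>v w)"
    by (rule word_act_add) (use assms w mult_mat_vec_carrier[OF lie_bracket_carrier[OF X Y] w] in auto)
  finally show ?thesis by (simp add: w_def)
qed

definition symp_form :: "nat \<Rightarrow> complex vec \<Rightarrow> complex vec \<Rightarrow> complex" where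
  "symp_form N x y = x \<bullet> (sympl_J N *\<^sub>v y)"

lemma sympl_J_dims [simp]: "dim_row (sympl_J N) = 2*N" "dim_col (sympl_J N) = 2*N"
  unfolding sympl_J_def by simp_all

lemma sympl_J_carrier [simp]: "sympl_J N \<in> carrier_mat (2*N) (2*N)"
  by (simp add: carrier_matI)

lemma sympl_J_mult_vec_index:
  assumes "y \<in> carrier_vec (2*N)" "i < 2*N"
  shows "(sympl_J N *\<^sub>v y) $ i = (if i < N then y $ (i+N) else - y $ (i-N))"
proof -
  have "(sympl_J N *\<^sub>v y) $ i =
      (\<Sum>j<2*N. (if i < N \<and> j = i + N then 1 else if N \<le> i \<and> j + N = i then -1 else 0) * y $ j)"
    using assms unfolding sympl_J_def by (simp add: scalar_prod_def lessThan_atLeast0)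
  also have "\<dots> = (\<Sum>j<2*N. if i < N then (if j = i + N then y $ j else 0)
                               else (if j = i - N then - y $ j else 0))"
    by (intro sum.cong) auto
  also have "\<dots> = (if i < N then y $ (i+N) else - y $ (i-N))"
    using assms(2) by (auto simp: sum.delta')
  finally show ?thesis .
qed

lemma symp_form_explicit:
  assumes "x \<in> carrier_vec (2*N)" "y \<in> carrier_vec (2*N)"
  shows "symp_form N x y = (\<Sum>i<N. x$i * y$(i+N) - x$(i+N) * y$i)"
proof -
  have split: "{..<2*N} = {..<N} \<union> {N..<2*N}" and shift: "{N..<2*N} = (\<lambda>i. i+N) ` {..<N}"
    by (auto simp: image_iff) (metis add.commute le_add_diff_inverse lessThan_iff less_diff_conv2 mult_2)
  have "symp_form N x y = (\<Sum>i<2*N. x$i * (sympl_J N *\<^sub>v y) $ i)"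
    using assms unfolding symp_form_def scalar_prod_def
    by (simp add: lessThan_atLeast0 carrier_matD[OF sympl_J_carrier] del: index_mult_mat_vec)
  also have "\<dots> = (\<Sum>i<2*N. x$i * (if i < N then y $ (i+N) else - y $ (i-N)))"
    using assms(2) by (intro sum.cong refl) (simp add: sympl_J_mult_vec_index del: index_mult_mat_vec)
  also have "\<dots> = (\<Sum>i<N. x$i * y$(i+N)) + (\<Sum>i\<in>{N..<2*N}. x$i * (- y $ (i-N)))"
    unfolding split by (subst sum.union_disjoint) auto
  also have "(\<Sum>i\<in>{N..<2*N}. x$i * (- y $ (i-N))) = (\<Sum>i<N. x$(i+N) * (- y $ i))"
    unfolding shift by (subst sum.reindex) (auto simp: inj_on_def)
  finally show ?thesis
    by (simp add: sum_subtractf sum_negf)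
qed

lemma symp_form_add_left:
  "x \<in> carrier_vec (2*N) \<Longrightarrow> y \<in> carrier_vec (2*N) \<Longrightarrow> z \<in> carrier_vec (2*N) \<Longrightarrow>
   symp_form N (x + y) z = symp_form N x z + symp_form N y z"
  by (simp add: symp_form_explicit sum.distrib[symmetric] algebra_simps)

lemma symp_form_add_right:
  "x \<in> carrier_vec (2*N) \<Longrightarrow> y \<in> carrier_vec (2*N) \<Longrightarrow> z \<in> carrier_vec (2*N) \<Longrightarrow>
   symp_form N z (x + y) = symp_form N z x + symp_form N z y"
  by (simp add: symp_form_explicit sum.distrib[symmetric] algebra_simps)

lemma symp_form_smult_left:
  "x \<in> carrier_vec (2*N) \<Longrightarrow> z \<in> carrier_vec (2*N) \<Longrightarrow>
   symp_form N (c \<cdot>\<^sub>v x) z = c * symp_form N x z"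
  by (simp add: symp_form_explicit sum_distrib_left algebra_simps)

lemma symp_form_smult_right:
  "x \<in> carrier_vec (2*N) \<Longrightarrow> z \<in> carrier_vec (2*N) \<Longrightarrow>
   symp_form N z (c \<cdot>\<^sub>v x) = c * symp_form N z x"
  by (simp add: symp_form_explicit sum_distrib_left algebra_simps)

lemma symp_form_diff_right:
  "x \<in> carrier_vec (2*N) \<Longrightarrow> y \<in> carrier_vec (2*N) \<Longrightarrow> z \<in> carrier_vec (2*N) \<Longrightarrow>
   symp_form N z (x - y) = symp_form N z x - symp_form N z y"
  by (simp add: symp_form_explicit sum_subtractf[symmetric] algebra_simps)

lemma symp_form_zero_left: "z \<in> carrier_vec (2*N) \<Longrightarrow> symp_form N (0\<^sub>v (2*N)) z = 0"
  by (simp add: symp_form_explicit)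

lemma symp_form_zero_right: "z \<in> carrier_vec (2*N) \<Longrightarrow> symp_form N z (0\<^sub>v (2*N)) = 0"
  by (simp add: symp_form_explicit)

lemma symp_form_swap:
  "x \<in> carrier_vec (2*N) \<Longrightarrow> y \<in> carrier_vec (2*N) \<Longrightarrow> symp_form N x y = - symp_form N y x"
  by (simp add: symp_form_explicit sum_negf[symmetric] algebra_simps)

lemma symp_form_self: "x \<in> carrier_vec (2*N) \<Longrightarrow> symp_form N x x = 0"
  using symp_form_swap[of x N x] by simp

lemma symp_form_unit_vec_left:
  assumes y: "y \<in> carrier_vec (2*N)" and j: "j < 2*N"
  shows "symp_form N (unit_vec (2*N) j) y = (if j < N then y$(j+N) else - y$(j-N))"
proof -
  have "symp_form N (unit_vec (2*N) j) y =
      (\<Sum>i<N. unit_vec (2*N) j $ i * y$(i+N) - unit_vec (2*N) j $ (i+N) * y$i)"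
    using y by (simp add: symp_form_explicit)
  also have "\<dots> = (\<Sum>i<N. if j < N then (if i = j then y$(i+N) else 0)
                            else (if i = j - N then - y$i else 0))"
    using j by (intro sum.cong) auto
  also have "\<dots> = (if j < N then y$(j+N) else - y$(j-N))"
    using j by auto
  finally show ?thesis .
qed

lemma symp_form_nondegenerate:
  assumes x: "x \<in> carrier_vec (2*N)" and "\<And>y. y \<in> carrier_vec (2*N) \<Longrightarrow> symp_form N x y = 0"
  shows "x = 0\<^sub>v (2*N)"
proof (rule eq_vecI)
  fix i assume "i < dim_vec (0\<^sub>v (2*N))"
  then have i: "i < 2*N" by simp
  define j where "j = (if i < N then i + N else i - N)"
  have j: "j < 2*N" using i by (auto simp: j_def)
  have "symp_form N (unit_vec (2*N) j) x = (if i < N then - x $ i else x $ i)"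
    using x i j by (auto simp: symp_form_unit_vec_left j_def)
  moreover have "symp_form N (unit_vec (2*N) j) x = 0"
    using assms(2)[of "unit_vec (2*N) j"] symp_form_swap[OF unit_vec_carrier x] by simp
  ultimately show "x $ i = 0\<^sub>v (2*N) $ i"
    using i by (simp split: if_splits)
qed (use x in simp)

lemma symp_form_as_sum:
  assumes "y \<in> carrier_vec (2*N)" "z \<in> carrier_vec (2*N)"
  shows "symp_form N y z = (\<Sum>b<2*N. symp_form N y (unit_vec (2*N) b) * z $ b)"
proof -
  have transp: "symp_form N y w = (transpose_mat (sympl_J N) *\<^sub>v y) \<bullet> w"
    if "w \<in> carrier_vec (2*N)" for w
    using assms that unfolding symp_form_def
    by (simp add: transpose_vec_mult_scalar[of "sympl_J N" "2*N" "2*N"])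
  have unit: "symp_form N y (unit_vec (2*N) b) = (transpose_mat (sympl_J N) *\<^sub>v y) $ b"
    if "b < 2*N" for b
    using assms that by (simp add: transp)
  have "symp_form N y z = (\<Sum>b<2*N. (transpose_mat (sympl_J N) *\<^sub>v y) $ b * z $ b)"
    using assms by (simp add: transp scalar_prod_def lessThan_atLeast0)
  also have "\<dots> = (\<Sum>b<2*N. symp_form N y (unit_vec (2*N) b) * z $ b)"
    by (intro sum.cong refl) (simp add: unit)
  finally show ?thesis .
qed

lemma sp_carrier: "X \<in> sp N \<Longrightarrow> X \<in> carrier_mat (2*N) (2*N)"
  unfolding sp_def by simp

lemma sp_symp_form_skew:
  assumes X: "X \<in> sp N" and a: "a \<in> carrier_vec (2*N)" and b: "b \<in> carrier_vec (2*N)"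
  shows "symp_form N a (X *\<^sub>v b) = - symp_form N (X *\<^sub>v a) b"
proof -
  have XC: "X \<in> carrier_mat (2*N) (2*N)" and XT: "transpose_mat X \<in> carrier_mat (2*N) (2*N)"
    using sp_carrier[OF X] by auto
  have Jb: "sympl_J N *\<^sub>v b \<in> carrier_vec (2*N)"
    using b by (metis mult_mat_vec_carrier sympl_J_carrier)
  have JXb: "sympl_J N *\<^sub>v (X *\<^sub>v b) \<in> carrier_vec (2*N)"
    using XC b by (metis mult_mat_vec_carrier sympl_J_carrier)
  have "transpose_mat X *\<^sub>v (sympl_J N *\<^sub>v b) + sympl_J N *\<^sub>v (X *\<^sub>v b) =
      (transpose_mat X * sympl_J N) *\<^sub>v b + (sympl_J N * X) *\<^sub>v b"
    using assoc_mult_mat_vec[OF XT sympl_J_carrier b] assoc_mult_mat_vec[OF sympl_J_carrier XC b]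
    by simp
  also have "\<dots> = (transpose_mat X * sympl_J N + sympl_J N * X) *\<^sub>v b"
    using XC XT b by (intro add_mult_distrib_mat_vec[symmetric]) auto
  also have "\<dots> = 0\<^sub>v (2*N)"
    using X b unfolding sp_def by auto
  finally have "transpose_mat X *\<^sub>v (sympl_J N *\<^sub>v b) + sympl_J N *\<^sub>v (X *\<^sub>v b) = 0\<^sub>v (2*N)" .
  then have "a \<bullet> (transpose_mat X *\<^sub>v (sympl_J N *\<^sub>v b)) + a \<bullet> (sympl_J N *\<^sub>v (X *\<^sub>v b)) = 0"
    using a XT Jb JXb by (subst scalar_prod_add_distrib[of _ "2*N", symmetric]) auto
  moreover have "a \<bullet> (transpose_mat X *\<^sub>v (sympl_J N *\<^sub>v b)) = (X *\<^sub>v a) \<bullet> (sympl_J N *\<^sub>v b)"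
    using transpose_vec_mult_scalar[of "transpose_mat X" "2*N" "2*N" "sympl_J N *\<^sub>v b" a] XC a Jb
    by simp
  ultimately show ?thesis
    unfolding symp_form_def by (simp add: eq_neg_iff_add_eq_0 add.commute)
qed


section \<open>Symmetric products\<close>

definition sym_prod :: "nat \<Rightarrow> complex vec \<Rightarrow> complex vec \<Rightarrow> complex mat" where
  "sym_prod N x y = mat (2*N) (2*N)
     (\<lambda>(a,b). x$a * symp_form N y (unit_vec (2*N) b) + y$a * symp_form N x (unit_vec (2*N) b))"

definition sym_sq :: "nat \<Rightarrow> complex vec \<Rightarrow> complex mat" where
  "sym_sq N u = mat (2*N) (2*N) (\<lambda>(a,b). u$a * symp_form N u (unit_vec (2*N) b))"

lemma sym_prod_dims [simp]: "dim_row (sym_prod N x y) = 2*N" "dim_col (sym_prod N x y) = 2*N"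
  unfolding sym_prod_def by simp_all

lemma sym_sq_dims [simp]: "dim_row (sym_sq N u) = 2*N" "dim_col (sym_sq N u) = 2*N"
  unfolding sym_sq_def by simp_all

lemma sym_prod_carrier [simp]: "sym_prod N x y \<in> carrier_mat (2*N) (2*N)"
  by (simp add: carrier_matI)

lemma sym_sq_carrier [simp]: "sym_sq N u \<in> carrier_mat (2*N) (2*N)"
  by (simp add: carrier_matI)

lemma sym_prod_mult_vec:
  assumes "x \<in> carrier_vec (2*N)" "y \<in> carrier_vec (2*N)" "z \<in> carrier_vec (2*N)"
  shows "sym_prod N x y *\<^sub>v z = symp_form N y z \<cdot>\<^sub>v x + symp_form N x z \<cdot>\<^sub>v y"
proof (rule eq_vecI)
  fix i assume "i < dim_vec (symp_form N y z \<cdot>\<^sub>v x + symp_form N x z \<cdot>\<^sub>v y)"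
  then have i: "i < 2*N" using assms by simp
  have "(sym_prod N x y *\<^sub>v z) $ i = (\<Sum>b<2*N. (x$i * symp_form N y (unit_vec (2*N) b)
                                  + y$i * symp_form N x (unit_vec (2*N) b)) * z$b)"
    using i assms unfolding sym_prod_def by (simp add: scalar_prod_def lessThan_atLeast0)
  also have "\<dots> = x$i * (\<Sum>b<2*N. symp_form N y (unit_vec (2*N) b) * z$b)
                 + y$i * (\<Sum>b<2*N. symp_form N x (unit_vec (2*N) b) * z$b)"
    by (simp add: sum_distrib_left sum.distrib algebra_simps)
  also have "\<dots> = x$i * symp_form N y z + y$i * symp_form N x z"
    using assms by (simp add: symp_form_as_sum[symmetric])
  finally show "(sym_prod N x y *\<^sub>v z) $ i = (symp_form N y z \<cdot>\<^sub>v x + symp_form N x z \<cdot>\<^sub>v y) $ i"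
    using i assms by simp
qed (use assms in simp)

lemma sym_sq_mult_vec:
  assumes "u \<in> carrier_vec (2*N)" "z \<in> carrier_vec (2*N)"
  shows "sym_sq N u *\<^sub>v z = symp_form N u z \<cdot>\<^sub>v u"
proof (rule eq_vecI)
  fix i assume "i < dim_vec (symp_form N u z \<cdot>\<^sub>v u)"
  then have i: "i < 2*N" using assms by simp
  have "(sym_sq N u *\<^sub>v z) $ i = u$i * (\<Sum>b<2*N. symp_form N u (unit_vec (2*N) b) * z$b)"
    using i assms unfolding sym_sq_def
    by (simp add: scalar_prod_def lessThan_atLeast0 sum_distrib_left algebra_simps)
  then show "(sym_sq N u *\<^sub>v z) $ i = (symp_form N u z \<cdot>\<^sub>v u) $ i"
    using i assms by (simp add: symp_form_as_sum[symmetric])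
qed (use assms in simp)

lemma sym_prod_comm: "sym_prod N x y = sym_prod N y x"
  unfolding sym_prod_def by (rule eq_matI) auto

lemma sym_prod_self: "sym_prod N u u = 2 \<cdot>\<^sub>m sym_sq N u"
  unfolding sym_prod_def sym_sq_def by (rule eq_matI) auto

lemma sym_sq_smult: "u \<in> carrier_vec (2*N) \<Longrightarrow> sym_sq N (c \<cdot>\<^sub>v u) = (c*c) \<cdot>\<^sub>m sym_sq N u"
  unfolding sym_sq_def by (intro eq_matI) (auto simp: symp_form_smult_left)

lemma sym_prod_add_right:
  "x \<in> carrier_vec (2*N) \<Longrightarrow> y \<in> carrier_vec (2*N) \<Longrightarrow> z \<in> carrier_vec (2*N) \<Longrightarrow>
   sym_prod N x (y + z) = sym_prod N x y + sym_prod N x z"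
  unfolding sym_prod_def by (rule eq_matI) (auto simp: symp_form_add_left algebra_simps)

lemma sym_prod_smult_right:
  "x \<in> carrier_vec (2*N) \<Longrightarrow> y \<in> carrier_vec (2*N) \<Longrightarrow>
   sym_prod N x (c \<cdot>\<^sub>v y) = c \<cdot>\<^sub>m sym_prod N x y"
  unfolding sym_prod_def by (rule eq_matI) (auto simp: symp_form_smult_left algebra_simps)

lemma sym_prod_smult_left:
  "x \<in> carrier_vec (2*N) \<Longrightarrow> y \<in> carrier_vec (2*N) \<Longrightarrow>
   sym_prod N (c \<cdot>\<^sub>v x) y = c \<cdot>\<^sub>m sym_prod N x y"
  using sym_prod_smult_right[of y N x c] sym_prod_comm by metis

lemma sym_prod_zero_right: "x \<in> carrier_vec (2*N) \<Longrightarrow> sym_prod N x (0\<^sub>v (2*N)) = 0\<^sub>m (2*N) (2*N)"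
  unfolding sym_prod_def by (rule eq_matI) (auto simp: symp_form_zero_left)

lemma lie_bracket_sym_prod:
  assumes X: "X \<in> sp N" and x: "x \<in> carrier_vec (2*N)" and y: "y \<in> carrier_vec (2*N)"
  shows "lie_bracket X (sym_prod N x y) = sym_prod N (X *\<^sub>v x) y + sym_prod N x (X *\<^sub>v y)"
proof (rule eq_mat_by_mult_vec[of _ "2*N"])
  have XC: "X \<in> carrier_mat (2*N) (2*N)" using sp_carrier[OF X] .
  fix z :: "complex vec" assume z: "z \<in> carrier_vec (2*N)"
  have Xx: "X *\<^sub>v x \<in> carrier_vec (2*N)" and Xy: "X *\<^sub>v y \<in> carrier_vec (2*N)"
    and Xz: "X *\<^sub>v z \<in> carrier_vec (2*N)"
    using XC x y z by auto
  have "lie_bracket X (sym_prod N x y) *\<^sub>v z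
      = X *\<^sub>v (symp_form N y z \<cdot>\<^sub>v x + symp_form N x z \<cdot>\<^sub>v y)
        - (symp_form N y (X *\<^sub>v z) \<cdot>\<^sub>v x + symp_form N x (X *\<^sub>v z) \<cdot>\<^sub>v y)"
    using XC x y z Xz by (simp add: lie_bracket_mult_vec sym_prod_mult_vec)
  also have "\<dots> = (symp_form N y z \<cdot>\<^sub>v (X *\<^sub>v x) + symp_form N x z \<cdot>\<^sub>v (X *\<^sub>v y))
        - ((- symp_form N (X *\<^sub>v y) z) \<cdot>\<^sub>v x + (- symp_form N (X *\<^sub>v x) z) \<cdot>\<^sub>v y)"
    using XC x y z
    by (simp add: mult_add_distrib_mat_vec[of _ "2*N" "2*N"] mult_mat_vec[of _ "2*N" "2*N"]
        sp_symp_form_skew[OF X])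
  also have "\<dots> = (symp_form N y z \<cdot>\<^sub>v (X *\<^sub>v x) + symp_form N (X *\<^sub>v x) z \<cdot>\<^sub>v y)
        + (symp_form N (X *\<^sub>v y) z \<cdot>\<^sub>v x + symp_form N x z \<cdot>\<^sub>v (X *\<^sub>v y))"
    by (rule eq_vecI) (use XC Xx Xy x y z in simp_all)
  also have "\<dots> = (sym_prod N (X *\<^sub>v x) y + sym_prod N x (X *\<^sub>v y)) *\<^sub>v z"
    using x y z Xx Xy by (simp add: add_mult_distrib_mat_vec[of _ "2*N" "2*N"] sym_prod_mult_vec)
  finally show "lie_bracket X (sym_prod N x y) *\<^sub>v z
      = (sym_prod N (X *\<^sub>v x) y + sym_prod N x (X *\<^sub>v y)) *\<^sub>v z" .
qed (use sp_carrier[OF X] in auto)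

lemma lie_bracket_sym_sq:
  assumes X: "X \<in> sp N" and u: "u \<in> carrier_vec (2*N)"
  shows "lie_bracket X (sym_sq N u) = sym_prod N (X *\<^sub>v u) u"
proof (rule eq_mat_by_mult_vec[of _ "2*N"])
  have XC: "X \<in> carrier_mat (2*N) (2*N)" using sp_carrier[OF X] .
  fix z :: "complex vec" assume z: "z \<in> carrier_vec (2*N)"
  have Xu: "X *\<^sub>v u \<in> carrier_vec (2*N)" and Xz: "X *\<^sub>v z \<in> carrier_vec (2*N)"
    using XC u z by auto
  have "lie_bracket X (sym_sq N u) *\<^sub>v z = symp_form N u z \<cdot>\<^sub>v (X *\<^sub>v u) - symp_form N u (X *\<^sub>v z) \<cdot>\<^sub>v u"
    using XC u z Xz by (simp add: lie_bracket_mult_vec sym_sq_mult_vec mult_mat_vec[of _ "2*N" "2*N"])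
  also have "\<dots> = sym_prod N (X *\<^sub>v u) u *\<^sub>v z"
    using Xu u z by (intro eq_vecI) (simp_all add: sym_prod_mult_vec sp_symp_form_skew[OF X])
  finally show "lie_bracket X (sym_sq N u) *\<^sub>v z = sym_prod N (X *\<^sub>v u) u *\<^sub>v z" .
qed (use sp_carrier[OF X] in auto)

lemma lie_bracket_sym_sq_sym_sq:
  assumes u: "u \<in> carrier_vec (2*N)" and v: "v \<in> carrier_vec (2*N)"
  shows "lie_bracket (sym_sq N u) (sym_sq N v) = symp_form N u v \<cdot>\<^sub>m sym_prod N u v"
proof (rule eq_mat_by_mult_vec[of _ "2*N"])
  fix z :: "complex vec" assume z: "z \<in> carrier_vec (2*N)"
  have "lie_bracket (sym_sq N u) (sym_sq N v) *\<^sub>v z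
      = (symp_form N v z * symp_form N u v) \<cdot>\<^sub>v u - (symp_form N u z * symp_form N v u) \<cdot>\<^sub>v v"
    using u v z
    by (simp add: lie_bracket_mult_vec[of _ "2*N"] sym_sq_mult_vec symp_form_smult_right smult_smult_assoc)
  also have "\<dots> = (symp_form N u v \<cdot>\<^sub>m sym_prod N u v) *\<^sub>v z"
    using u v z symp_form_swap[OF v u]
    by (simp add: smult_mat_mult_vec[of _ "2*N" "2*N"] sym_prod_mult_vec)
      (rule eq_vecI; simp add: algebra_simps)
  finally show "lie_bracket (sym_sq N u) (sym_sq N v) *\<^sub>v z = (symp_form N u v \<cdot>\<^sub>m sym_prod N u v) *\<^sub>v z" .
qed (use u v in auto)


lemma sym_prod_bracket_identity:
  assumes u: "u \<in> carrier_vec (2*N)" and x: "x \<in> carrier_vec (2*N)" and z: "z \<in> carrier_vec (2*N)"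
  shows "lie_bracket (sym_prod N x u) (sym_prod N z u + sym_prod N x x)
      + ((-2 * symp_form N u x) \<cdot>\<^sub>m (sym_prod N z u + sym_prod N x x)
      + ((- symp_form N u z) \<cdot>\<^sub>m sym_prod N x u + (- symp_form N x z) \<cdot>\<^sub>m sym_prod N u u))
      = (-3 * symp_form N u x) \<cdot>\<^sub>m sym_prod N z u"
proof (rule eq_mat_by_mult_vec[of _ "2*N"])
  fix w :: "complex vec" assume w: "w \<in> carrier_vec (2*N)"
  have forms: "symp_form N x u = - symp_form N u x" "symp_form N z u = - symp_form N u z"
    "symp_form N z x = - symp_form N x z"
    "symp_form N u u = 0" "symp_form N x x = 0" "symp_form N z z = 0"
    using symp_form_swap[OF x u] symp_form_swap[OF z u] symp_form_swap[OF z x]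
      symp_form_self[OF u] symp_form_self[OF x] symp_form_self[OF z] by simp_all
  show "(lie_bracket (sym_prod N x u) (sym_prod N z u + sym_prod N x x)
      + ((-2 * symp_form N u x) \<cdot>\<^sub>m (sym_prod N z u + sym_prod N x x)
      + ((- symp_form N u z) \<cdot>\<^sub>m sym_prod N x u + (- symp_form N x z) \<cdot>\<^sub>m sym_prod N u u))) *\<^sub>v w
      = ((-3 * symp_form N u x) \<cdot>\<^sub>m sym_prod N z u) *\<^sub>v w"
    using u x z w forms
    apply (simp add: add_mult_distrib_mat_vec[of _ "2*N" "2*N"] smult_mat_mult_vec[of _ "2*N" "2*N"]
        lie_bracket_mult_vec[of _ "2*N"] sym_prod_mult_vec symp_form_add_right symp_form_smult_right
        symp_form_add_left symp_form_smult_left)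
    by (rule eq_vecI; simp; (simp add: algebra_simps)?)
qed simp_all

section \<open>Symmetric products span \<open>sp(2N)\<close>\<close>

definition symp_dual_basis :: "nat \<Rightarrow> nat \<Rightarrow> complex vec" where
  "symp_dual_basis N j =
     (if N \<le> j then unit_vec (2*N) (j-N) else (-1) \<cdot>\<^sub>v unit_vec (2*N) (j+N))"

lemma symp_dual_basis_carrier [simp]: "symp_dual_basis N j \<in> carrier_vec (2*N)"
  unfolding symp_dual_basis_def by simp

lemma symp_form_dual_basis_unit_vec:
  assumes "j < 2*N" "b < 2*N"
  shows "symp_form N (symp_dual_basis N j) (unit_vec (2*N) b) = (if j = b then 1 else 0)"
  using assms unfolding symp_dual_basis_def
  by (auto simp: symp_form_smult_left symp_form_unit_vec_left)

lemma symp_dual_basis_expansion: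
  assumes z: "z \<in> carrier_vec (2*N)" and a: "a < 2*N"
  shows "(\<Sum>j<2*N. symp_dual_basis N j $ a * symp_form N z (unit_vec (2*N) j)) = z $ a"
proof (cases "a < N")
  case True
  have "(\<Sum>j<2*N. symp_dual_basis N j $ a * symp_form N z (unit_vec (2*N) j))
      = (\<Sum>j<2*N. if j = a + N then symp_form N z (unit_vec (2*N) j) else 0)"
    using True unfolding symp_dual_basis_def by (intro sum.cong) auto
  also have "\<dots> = - symp_form N (unit_vec (2*N) (a + N)) z"
    using True z by (simp add: symp_form_swap[OF z])
  also have "\<dots> = z $ a"
    using True z by (simp add: symp_form_unit_vec_left)
  finally show ?thesis .
next
  case False
  have "(\<Sum>j<2*N. symp_dual_basis N j $ a * symp_form N z (unit_vec (2*N) j))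
      = (\<Sum>j<2*N. if j = a - N then - symp_form N z (unit_vec (2*N) j) else 0)"
    using False a unfolding symp_dual_basis_def by (intro sum.cong) auto
  also have "\<dots> = symp_form N (unit_vec (2*N) (a - N)) z"
    using False a z by (simp add: symp_form_swap[OF z])
  also have "\<dots> = z $ a"
  proof -
    have "a - N < N" "a - N + N = a" using False a by arith+
    then show ?thesis using symp_form_unit_vec_left[OF z, of "a - N"] by simp
  qed
  finally show ?thesis .
qed

lemma sp_index_as_sum:
  assumes M: "M \<in> sp N" and a: "a < 2*N" and b: "b < 2*N"
  shows "M $$ (a,b) =
    (\<Sum>j<2*N. ((1/2) \<cdot>\<^sub>m sym_prod N (M *\<^sub>v unit_vec (2*N) j) (symp_dual_basis N j)) $$ (a,b))"
proof -
  have MC: "M \<in> carrier_mat (2*N) (2*N)" using sp_carrier[OF M] .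
  define Mb where "Mb = M *\<^sub>v unit_vec (2*N) b"
  have Mb: "Mb \<in> carrier_vec (2*N)" using MC unfolding Mb_def by simp
  have entry: "((1/2) \<cdot>\<^sub>m sym_prod N (M *\<^sub>v unit_vec (2*N) j) (symp_dual_basis N j)) $$ (a,b)
      = (1/2) * (if j = b then M $$ (a,b) else 0)
        + (1/2) * (symp_dual_basis N j $ a * symp_form N Mb (unit_vec (2*N) j))"
    if j: "j < 2*N" for j
  proof -
    have "symp_form N (M *\<^sub>v unit_vec (2*N) j) (unit_vec (2*N) b)
        = - symp_form N (unit_vec (2*N) j) Mb"
      using sp_symp_form_skew[OF M unit_vec_carrier unit_vec_carrier, of j b] unfolding Mb_def by simp
    also have "\<dots> = symp_form N Mb (unit_vec (2*N) j)"
      using symp_form_swap[OF unit_vec_carrier Mb, of j] by simp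
    moreover have "symp_form N (symp_dual_basis N j) (unit_vec (2*N) b) = (if j = b then 1 else 0)"
      using j b by (rule symp_form_dual_basis_unit_vec)
    ultimately show ?thesis
      using a b j MC unfolding sym_prod_def by (simp add: distrib_left)
  qed
  have "(\<Sum>j<2*N. ((1/2) \<cdot>\<^sub>m sym_prod N (M *\<^sub>v unit_vec (2*N) j) (symp_dual_basis N j)) $$ (a,b))
      = (1/2) * (\<Sum>j<2*N. if j = b then M $$ (a,b) else 0)
        + (1/2) * (\<Sum>j<2*N. symp_dual_basis N j $ a * symp_form N Mb (unit_vec (2*N) j))"
    unfolding sum_distrib_left sum.distrib[symmetric] by (rule sum.cong) (simp_all add: entry)
  also have "\<dots> = M $$ (a,b)"
  proof -
    have "(\<Sum>j<2*N. if j = b then M $$ (a,b) else 0) = M $$ (a,b)"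
      using b by (simp add: sum.delta')
    moreover have "(\<Sum>j<2*N. symp_dual_basis N j $ a * symp_form N Mb (unit_vec (2*N) j)) = M $$ (a,b)"
      using a b MC Mb by (simp add: symp_dual_basis_expansion Mb_def)
    ultimately show ?thesis by simp
  qed
  finally show ?thesis by simp
qed

lemma mat_subspace_sum_mem:
  fixes k :: nat
  assumes L: "mat_subspace n L" and T: "\<And>j. j < k \<Longrightarrow> T j \<in> L"
  shows "mat n n (\<lambda>(a,b). \<Sum>j<k. T j $$ (a,b)) \<in> L"
  using T
proof (induction k)
  case 0
  have "mat n n (\<lambda>(a,b). \<Sum>j<0. T j $$ (a,b)) = 0\<^sub>m n n" by (intro eq_matI) auto
  then show ?case using L unfolding mat_subspace_def by metis
next
  case (Suc k)
  have "T k \<in> carrier_mat n n" using Suc.prems L unfolding mat_subspace_def by auto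
  then have "mat n n (\<lambda>(a,b). \<Sum>j<Suc k. T j $$ (a,b)) = mat n n (\<lambda>(a,b). \<Sum>j<k. T j $$ (a,b)) + T k"
    by (intro eq_matI) auto
  then show ?case using Suc.IH Suc.prems L unfolding mat_subspace_def by (metis lessI less_SucI)
qed

lemma sp_subset_if_sym_prods_mem:
  assumes L: "mat_subspace (2*N) L"
    and sym_prod_mem: "\<And>x y. x \<in> carrier_vec (2*N) \<Longrightarrow> y \<in> carrier_vec (2*N) \<Longrightarrow> sym_prod N x y \<in> L"
  shows "sp N \<subseteq> L"
proof
  fix M assume M: "M \<in> sp N"
  have "M = mat (2*N) (2*N) (\<lambda>(a,b).
      \<Sum>j<2*N. ((1/2) \<cdot>\<^sub>m sym_prod N (M *\<^sub>v unit_vec (2*N) j) (symp_dual_basis N j)) $$ (a,b))"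
    using sp_carrier[OF M] by (intro eq_matI) (auto simp: sp_index_as_sum[OF M])
  also have "\<dots> \<in> L"
    using L sp_carrier[OF M] sym_prod_mem
    by (intro mat_subspace_sum_mem) (auto simp: mat_subspace_def)
  finally show "M \<in> L" .
qed

section \<open>Rank-one elements of \<open>sp(2N)\<close>\<close>

lemma (in vec_space) lin_indpt_pair:
  assumes x: "x \<in> carrier_vec n" and y: "y \<in> carrier_vec n"
    and x0: "x \<noteq> 0\<^sub>v n" and y_indep: "\<And>c. y \<noteq> c \<cdot>\<^sub>v x"
  shows "lin_indpt {x, y}"
proof (rule finite_lin_indpt2)
  have xy: "x \<noteq> y" using y_indep[of 1] by auto
  fix a assume "True" and "lincomb a {x, y} = 0\<^sub>v n"
  moreover have "lincomb a ({x} \<union> {y}) = a y \<cdot>\<^sub>v y + lincomb a {x}"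
    by (rule lincomb_insert) (use x y xy in auto)
  moreover have "lincomb a ({} \<union> {x}) = a x \<cdot>\<^sub>v x + lincomb a {}"
    by (rule lincomb_insert) (use x in auto)
  ultimately have lc: "a x \<cdot>\<^sub>v x + a y \<cdot>\<^sub>v y = 0\<^sub>v n"
    using x y by (auto simp: insert_commute comm_add_vec lincomb_def)
  have lc_i: "a x * x $ i + a y * y $ i = 0" if "i < n" for i
    using arg_cong[OF lc, of "\<lambda>v. v $ i"] that x y by simp
  have ay: "a y = 0"
  proof (rule ccontr)
    assume ay: "a y \<noteq> 0"
    have "y $ i = (- a x / a y) * x $ i" if "i < n" for i
    proof -
      have "a y * y $ i = - (a x * x $ i)"
        using lc_i[OF that] by (simp add: eq_neg_iff_add_eq_0 add.commute)
      then show ?thesis using ay by (simp add: field_simps)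
    qed
    then have "y = (- a x / a y) \<cdot>\<^sub>v x"
      using x y by (intro eq_vecI) auto
    then show False using y_indep by blast
  qed
  obtain i where i: "i < n" "x $ i \<noteq> 0"
    using x x0 by (metis carrier_vecD eq_vecI index_zero_vec)
  have "a x = 0" using lc_i[OF i(1)] ay i(2) by simp
  then show "\<forall>v\<in>{x, y}. a v = 0" using ay by simp
qed (use x y in auto)

lemma (in vec_space) rank_one_cols_smult:
  assumes A: "A \<in> carrier_mat n nc" and r: "rank A = 1"
  obtains x where "x \<in> carrier_vec n" "x \<noteq> 0\<^sub>v n" "\<And>j. j < nc \<Longrightarrow> \<exists>c. col A j = c \<cdot>\<^sub>v x"
proof -
  have "\<exists>j0<nc. col A j0 \<noteq> 0\<^sub>v n"
  proof (rule ccontr)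
    assume "\<not> (\<exists>j0<nc. col A j0 \<noteq> 0\<^sub>v n)"
    then have "A $$ (i,j) = 0" if "i < n" "j < nc" for i j
      using A that by (metis carrier_matD(1,2) index_col index_zero_vec(1))
    then have "A = 0\<^sub>m n nc"
      using A by (intro eq_matI) auto
    then show False using r rank_0I by simp
  qed
  then obtain j0 where j0: "j0 < nc" "col A j0 \<noteq> 0\<^sub>v n" by blast
  define x where "x = col A j0"
  have x: "x \<in> carrier_vec n" "x \<noteq> 0\<^sub>v n" unfolding x_def using A j0 by auto
  have "\<exists>c. col A j = c \<cdot>\<^sub>v x" if j: "j < nc" for j
  proof (rule ccontr)
    assume "\<nexists>c. col A j = c \<cdot>\<^sub>v x"
    then have "lin_indpt {x, col A j}"
      using A j x by (intro lin_indpt_pair) auto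
    moreover have "{x, col A j} \<subseteq> set (cols A)"
      unfolding x_def using j j0 A by (auto simp: cols_def)
    ultimately have "card {x, col A j} \<le> rank A"
      using rank_ge_card_indpt[OF A] by blast
    moreover have "x \<noteq> col A j"
      using \<open>\<nexists>c. col A j = c \<cdot>\<^sub>v x\<close> by (metis one_smult_vec)
    ultimately show False using r by simp
  qed
  then show thesis using x that by blast
qed

lemma mult_vec_if_cols_smult:
  fixes A :: "'a :: comm_ring_1 mat"
  assumes A: "A \<in> carrier_mat n nc" and x: "x \<in> carrier_vec n" and z: "z \<in> carrier_vec nc"
    and cols: "\<And>j. j < nc \<Longrightarrow> col A j = c j \<cdot>\<^sub>v x"
  shows "A *\<^sub>v z = (\<Sum>j<nc. c j * z $ j) \<cdot>\<^sub>v x"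
proof (rule eq_vecI)
  fix i assume "i < dim_vec ((\<Sum>j<nc. c j * z $ j) \<cdot>\<^sub>v x)"
  then have i: "i < n" using x by simp
  have "A $$ (i,j) = c j * x $ i" if "j < nc" for j
  proof -
    have "A $$ (i,j) = col A j $ i" using A i that by simp
    then show ?thesis using cols[OF that] i x by simp
  qed
  then show "(A *\<^sub>v z) $ i = ((\<Sum>j<nc. c j * z $ j) \<cdot>\<^sub>v x) $ i"
    using A i z x by (simp add: scalar_prod_def lessThan_atLeast0 sum_distrib_left algebra_simps)
qed (use A x in simp)

lemma sp_eq_smult_sym_sq_if_image_line:
  assumes A: "A \<in> sp N" and x: "x \<in> carrier_vec (2*N)" "x \<noteq> 0\<^sub>v (2*N)"
    and line: "\<And>z. z \<in> carrier_vec (2*N) \<Longrightarrow> A *\<^sub>v z = \<phi> z \<cdot>\<^sub>v x"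
  obtains c where "A = c \<cdot>\<^sub>m sym_sq N x"
proof -
  obtain b where b: "b \<in> carrier_vec (2*N)" "symp_form N x b \<noteq> 0"
    using symp_form_nondegenerate[OF x(1)] x(2) by blast
  define c where "c = \<phi> b / symp_form N x b"
  have \<phi>: "\<phi> z = c * symp_form N x z" if z: "z \<in> carrier_vec (2*N)" for z
  proof -
    have "\<phi> b * symp_form N z x = - (\<phi> z * symp_form N x b)"
      using sp_symp_form_skew[OF A z b(1)] line[OF z] line[OF b(1)] z b x
      by (simp add: symp_form_smult_left symp_form_smult_right)
    then show ?thesis
      unfolding c_def using b(2) symp_form_swap[OF z x(1)] by (simp add: field_simps)
  qed
  have "A *\<^sub>v z = (c \<cdot>\<^sub>m sym_sq N x) *\<^sub>v z" if z: "z \<in> carrier_vec (2*N)" for z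
    using line[OF z] \<phi>[OF z] x(1) z
    by (simp add: smult_mat_mult_vec[of _ "2*N" "2*N"] sym_sq_mult_vec smult_smult_assoc)
  then have "A = c \<cdot>\<^sub>m sym_sq N x"
    using sp_carrier[OF A] by (intro eq_mat_by_mult_vec[of _ "2*N"]) auto
  then show thesis using that by blast
qed

lemma sp_rank_one_eq_sym_sq:
  assumes A: "A \<in> sp N" and r: "vec_space.rank (2*N) A = 1"
  obtains u where "u \<in> carrier_vec (2*N)" "u \<noteq> 0\<^sub>v (2*N)" "A = sym_sq N u"
proof -
  have AC: "A \<in> carrier_mat (2*N) (2*N)" using sp_carrier[OF A] .
  obtain x where x: "x \<in> carrier_vec (2*N)" "x \<noteq> 0\<^sub>v (2*N)"
    and cols: "\<And>j. j < 2*N \<Longrightarrow> \<exists>c. col A j = c \<cdot>\<^sub>v x"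
    using vec_space.rank_one_cols_smult[OF AC r] by blast
  have "\<forall>j. \<exists>c. j < 2*N \<longrightarrow> col A j = c \<cdot>\<^sub>v x" using cols by blast
  then obtain a where a: "\<And>j. j < 2*N \<Longrightarrow> col A j = a j \<cdot>\<^sub>v x" by metis
  have line: "A *\<^sub>v z = (\<Sum>j<2*N. a j * z $ j) \<cdot>\<^sub>v x" if "z \<in> carrier_vec (2*N)" for z
    using mult_vec_if_cols_smult[OF AC x(1) that a] .
  obtain c where c: "A = c \<cdot>\<^sub>m sym_sq N x"
    using sp_eq_smult_sym_sq_if_image_line[OF A x line] .
  have "c \<noteq> 0"
  proof
    assume "c = 0"
    then have "A = 0\<^sub>m (2*N) (2*N)" using c by (intro eq_matI) auto
    then have "vec_space.rank (2*N) A = 0" using vec_space.rank_0I by simp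
    then show False using r by simp
  qed
  define u where "u = csqrt c \<cdot>\<^sub>v x"
  have u: "u \<in> carrier_vec (2*N)" unfolding u_def using x by simp
  have "x = (1 / csqrt c) \<cdot>\<^sub>v u"
    unfolding u_def using \<open>c \<noteq> 0\<close> by (simp add: smult_smult_assoc)
  then have "u \<noteq> 0\<^sub>v (2*N)"
    using x(2) by auto
  moreover have "A = sym_sq N u"
    unfolding u_def c using sym_sq_smult[OF x(1)] by (simp add: power2_eq_square[symmetric])
  ultimately show thesis using that u by blast
qed

section \<open>Polarization\<close>

lemma sum_binomial_Suc:
  fixes c :: "nat \<Rightarrow> 'a :: comm_semiring_1"
  shows "(\<Sum>i\<le>Suc m. of_nat (Suc m choose i) * c i) =
         (\<Sum>i\<le>m. of_nat (m choose i) * c i) + (\<Sum>i\<le>m. of_nat (m choose i) * c (Suc i))"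
proof -
  have "(\<Sum>i\<le>Suc m. of_nat (Suc m choose i) * c i)
      = c 0 + (\<Sum>i\<le>m. of_nat (m choose Suc i) * c (Suc i)) + (\<Sum>i\<le>m. of_nat (m choose i) * c (Suc i))"
    by (subst sum.atMost_Suc_shift) (simp add: sum.distrib algebra_simps)
  also have "c 0 + (\<Sum>i\<le>m. of_nat (m choose Suc i) * c (Suc i)) = (\<Sum>i\<le>Suc m. of_nat (m choose i) * c i)"
    by (subst sum.atMost_Suc_shift) simp
  also have "\<dots> = (\<Sum>i\<le>m. of_nat (m choose i) * c i)"
    by (simp add: binomial_eq_0)
  finally show ?thesis .
qed

lemma coeff_eq_0_if_poly_fun_eq_0:
  fixes c :: "nat \<Rightarrow> 'a :: {idom, ring_char_0}"
  assumes "\<And>t. (\<Sum>i\<le>m. c i * t ^ i) = 0" and "k \<le> m"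
  shows "c k = 0"
proof -
  define p where "p = (\<Sum>i\<le>m. monom (c i) i)"
  have "poly p t = 0" for t
    unfolding p_def using assms(1)[of t] by (simp add: poly_sum poly_monom)
  then have "p = 0" using poly_all_0_iff_0 by blast
  moreover have "coeff p k = c k"
    unfolding p_def using assms(2) by (simp add: coeff_sum coeff_monom)
  ultimately show ?thesis by simp
qed

lemma swap_invariant_move_to_front:
  assumes swap: "\<And>A X Y B. set (A @ X # Y # B) \<subseteq> S \<Longrightarrow> length (A @ X # Y # B) = n \<Longrightarrow>
      f (A @ X # Y # B) = f (A @ Y # X # B)"
  shows "set (A @ B @ X # C) \<subseteq> S \<Longrightarrow> length (A @ B @ X # C) = n \<Longrightarrow>
      f (A @ B @ X # C) = f (A @ X # B @ C)"
proof (induction B arbitrary: A)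
  case (Cons b B)
  have "f (A @ (b # B) @ X # C) = f ((A @ [b]) @ B @ X # C)" by simp
  also have "\<dots> = f ((A @ [b]) @ X # B @ C)" using Cons by (intro Cons.IH) auto
  also have "\<dots> = f (A @ b # X # B @ C)" by simp
  also have "\<dots> = f (A @ X # b # B @ C)" using Cons.prems by (intro swap) auto
  finally show ?case by simp
qed simp

lemma swap_invariant_imp_perm_invariant:
  assumes swap: "\<And>A X Y B. set (A @ X # Y # B) \<subseteq> S \<Longrightarrow> length (A @ X # Y # B) = n \<Longrightarrow>
      f (A @ X # Y # B) = f (A @ Y # X # B)"
  shows "mset P = mset Q \<Longrightarrow> set (A @ P) \<subseteq> S \<Longrightarrow> length (A @ P) = n \<Longrightarrow> f (A @ P) = f (A @ Q)"
proof (induction P arbitrary: A Q)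
  case (Cons x P)
  have "x \<in> set Q" using Cons.prems(1) by (metis list.set_intros(1) set_mset_mset)
  then obtain Q1 Q2 where Q: "Q = Q1 @ x # Q2" by (meson split_list)
  have "mset P = mset (Q1 @ Q2)" using Cons.prems(1) Q by simp
  then have "f ((A @ [x]) @ P) = f ((A @ [x]) @ Q1 @ Q2)" using Cons by (intro Cons.IH) auto
  also have "\<dots> = f (A @ Q1 @ x # Q2)"
    using swap_invariant_move_to_front[of S n f, OF swap, of A Q1 x Q2] Cons.prems Q
    by (metis append.assoc append_Cons append_Nil length_append mset_eq_length set_append set_mset_mset)
  finally show ?case using Q by simp
qed simp

text \<open>By symmetry, additivity and homogeneity need only be required in the first argument.\<close>

locale symmetric_multilinear =
  fixes G :: "'a :: plus list \<Rightarrow> 'k :: {idom, ring_char_0}" and S :: "'a set" and n :: nat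
    and scale :: "'k \<Rightarrow> 'a \<Rightarrow> 'a"
  assumes symmetric: "\<And>P Q. set P \<subseteq> S \<Longrightarrow> length P = n \<Longrightarrow> mset P = mset Q \<Longrightarrow> G P = G Q"
    and add_closed: "\<And>X Y. X \<in> S \<Longrightarrow> Y \<in> S \<Longrightarrow> X + Y \<in> S"
    and scale_closed: "\<And>X c. X \<in> S \<Longrightarrow> scale c X \<in> S"
    and additive: "\<And>X Y P. X \<in> S \<Longrightarrow> Y \<in> S \<Longrightarrow> set P \<subseteq> S \<Longrightarrow> Suc (length P) = n \<Longrightarrow>
        G ((X + Y) # P) = G (X # P) + G (Y # P)"
    and homogeneous: "\<And>X c P. X \<in> S \<Longrightarrow> set P \<subseteq> S \<Longrightarrow> Suc (length P) = n \<Longrightarrow>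
        G (scale c X # P) = c * G (X # P)"
begin

lemma binomial_expansion:
  assumes "length R + m = n" "set R \<subseteq> S" "X \<in> S" "Y \<in> S"
  shows "G (R @ replicate m (Y + scale t X)) =
     (\<Sum>i\<le>m. of_nat (m choose i) * (t ^ i * G (R @ replicate i X @ replicate (m - i) Y)))"
  using assms(1,2)
proof (induction m arbitrary: R)
  case (Suc m)
  define Z where "Z = Y + scale t X"
  have Z: "Z \<in> S" unfolding Z_def using assms(3,4) add_closed scale_closed by blast
  define \<gamma> where "\<gamma> i = G (R @ replicate i X @ replicate (Suc m - i) Y)" for i
  have expand: "G (U # R @ replicate m Z)
      = (\<Sum>i\<le>m. of_nat (m choose i) * (t ^ i * \<gamma> (i + k)))"
    if U: "U \<in> S" and UXY: "k = 0 \<and> U = Y \<or> k = 1 \<and> U = X" for U k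
  proof -
    have "G ((U # R) @ replicate m Z) =
        (\<Sum>i\<le>m. of_nat (m choose i) * (t ^ i * G ((U # R) @ replicate i X @ replicate (m - i) Y)))"
      unfolding Z_def by (rule Suc.IH) (use Suc.prems U in auto)
    also have "\<dots> = (\<Sum>i\<le>m. of_nat (m choose i) * (t ^ i * \<gamma> (i + k)))"
    proof (intro sum.cong refl)
      fix i assume i: "i \<in> {..m}"
      have "G ((U # R) @ replicate i X @ replicate (m - i) Y) = \<gamma> (i + k)"
        unfolding \<gamma>_def
        by (rule symmetric) (use Suc.prems U UXY i assms(3,4) in \<open>auto simp: Suc_diff_le\<close>)
      then show "of_nat (m choose i) * (t ^ i * G ((U # R) @ replicate i X @ replicate (m - i) Y))
          = of_nat (m choose i) * (t ^ i * \<gamma> (i + k))" by simp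
    qed
    finally show ?thesis by simp
  qed
  have "G (R @ replicate (Suc m) Z) = G (Z # R @ replicate m Z)"
    by (rule symmetric) (use Suc.prems Z in auto)
  also have "\<dots> = G (Y # R @ replicate m Z) + t * G (X # R @ replicate m Z)"
  proof -
    have P: "set (R @ replicate m Z) \<subseteq> S" "Suc (length (R @ replicate m Z)) = n"
      using Suc.prems Z by auto
    show ?thesis
      using additive[OF assms(4) scale_closed[OF assms(3)] P] homogeneous[OF assms(3) P]
      unfolding Z_def by simp
  qed
  also have "\<dots> = (\<Sum>i\<le>m. of_nat (m choose i) * (t ^ i * \<gamma> i))
                 + t * (\<Sum>i\<le>m. of_nat (m choose i) * (t ^ i * \<gamma> (Suc i)))"
    using expand[of Y 0] expand[of X 1] assms(3,4) by simp
  also have "\<dots> = (\<Sum>i\<le>Suc m. of_nat (Suc m choose i) * (t ^ i * \<gamma> i))"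
    using sum_binomial_Suc[of m "\<lambda>i. t ^ i * \<gamma> i"] by (simp add: sum_distrib_left algebra_simps)
  finally show ?case unfolding \<gamma>_def Z_def by simp
qed simp

lemma vanishes_if_diagonal_vanishes:
  assumes diagonal: "\<And>X. X \<in> S \<Longrightarrow> G (replicate n X) = 0" and "S \<noteq> {}"
    and P: "set P \<subseteq> S" "length P = n"
  shows "G P = 0"
proof -
  have "G (Q @ replicate (n - j) Y) = 0" if "j \<le> n" "length Q = j" "set Q \<subseteq> S" "Y \<in> S" for j Q Y
    using that
  proof (induction j arbitrary: Q Y)
    case 0
    then show ?case using diagonal by simp
  next
    case (Suc j)
    obtain Q0 X where Q: "Q = Q0 @ [X]" using Suc.prems(2) by (metis length_Suc_conv_rev)
    have X: "X \<in> S" and Q0: "set Q0 \<subseteq> S" "length Q0 = j" using Suc.prems Q by auto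
    define m where "m = n - j"
    have m: "1 \<le> m" unfolding m_def using Suc.prems by simp
    define \<gamma> where "\<gamma> i = of_nat (m choose i) * G (Q0 @ replicate i X @ replicate (m - i) Y)" for i
    have "(\<Sum>i\<le>m. \<gamma> i * t ^ i) = 0" for t
    proof -
      have "G (Q0 @ replicate m (Y + scale t X)) = 0"
        using Suc.IH Suc.prems Q0 add_closed[OF Suc.prems(4) scale_closed[OF X]] unfolding m_def by simp
      then show ?thesis
        unfolding \<gamma>_def using binomial_expansion[of Q0 m X Y t] Q0 Suc.prems X m_def
        by (simp add: algebra_simps)
    qed
    then have "\<gamma> 1 = 0" using coeff_eq_0_if_poly_fun_eq_0 m by blast
    then have "G (Q0 @ [X] @ replicate (m - 1) Y) = 0"
      using m unfolding \<gamma>_def by simp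
    moreover have "m - 1 = n - Suc j" unfolding m_def by simp
    ultimately show ?case using Q by simp
  qed
  moreover obtain Y where "Y \<in> S" using \<open>S \<noteq> {}\<close> by blast
  ultimately show ?thesis using P by (metis append_Nil2 diff_self_eq_0 order_refl replicate_0)
qed

end

lemma sp_lie_bracket_funpow_carrier:
  "X \<in> sp N \<Longrightarrow> M \<in> carrier_mat (2*N) (2*N) \<Longrightarrow> (lie_bracket X ^^ k) M \<in> carrier_mat (2*N) (2*N)"
  by (induction k) (auto simp: sp_carrier)

lemma symp_form_lie_bracket_funpow_sym_sq:
  assumes X: "X \<in> sp N" and u: "u \<in> carrier_vec (2*N)"
  shows "w \<in> carrier_vec (2*N) \<Longrightarrow> z \<in> carrier_vec (2*N) \<Longrightarrow>
    symp_form N w ((lie_bracket X ^^ k) (sym_sq N u) *\<^sub>v z) = (\<Sum>j\<le>k. of_nat (k choose j) *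
      (symp_form N (word_act (replicate (k - j) X) u) z * symp_form N w (word_act (replicate j X) u)))"
proof (induction k arbitrary: w z)
  case 0
  then show ?case using u by (simp add: sym_sq_mult_vec symp_form_smult_right)
next
  case (Suc k w z)
  have XC: "X \<in> carrier_mat (2*N) (2*N)" using sp_carrier[OF X] .
  define p where "p i = word_act (replicate i X) u" for i
  have p: "p i \<in> carrier_vec (2*N)" for i
    unfolding p_def using XC u by (auto intro: word_act_carrier)
  have p_Suc: "X *\<^sub>v p i = p (Suc i)" for i
    unfolding p_def by simp
  define M where "M = (lie_bracket X ^^ k) (sym_sq N u)"
  have MC: "M \<in> carrier_mat (2*N) (2*N)"
    unfolding M_def using sp_lie_bracket_funpow_carrier[OF X] by simp
  have Xw: "X *\<^sub>v w \<in> carrier_vec (2*N)" and Xz: "X *\<^sub>v z \<in> carrier_vec (2*N)"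
    using XC Suc.prems by auto
  have "symp_form N w ((lie_bracket X ^^ Suc k) (sym_sq N u) *\<^sub>v z)
      = - symp_form N (X *\<^sub>v w) (M *\<^sub>v z) - symp_form N w (M *\<^sub>v (X *\<^sub>v z))"
    unfolding M_def[symmetric] funpow.simps o_apply
    using XC MC Suc.prems
    by (simp add: lie_bracket_mult_vec symp_form_diff_right sp_symp_form_skew[OF X])
  also have "symp_form N (X *\<^sub>v w) (M *\<^sub>v z)
      = - (\<Sum>j\<le>k. of_nat (k choose j) * (symp_form N (p (k - j)) z * symp_form N w (p (Suc j))))"
    unfolding M_def p_def[symmetric] Suc.IH[OF Xw Suc.prems(2)]
    using sp_symp_form_skew[OF X Suc.prems(1) p] p_Suc by (simp add: sum_negf[symmetric])
  also have "symp_form N w (M *\<^sub>v (X *\<^sub>v z))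
      = - (\<Sum>j\<le>k. of_nat (k choose j) * (symp_form N (p (Suc k - j)) z * symp_form N w (p j)))"
    unfolding M_def p_def[symmetric] Suc.IH[OF Suc.prems(1) Xz]
    using sp_symp_form_skew[OF X p Suc.prems(2)] p_Suc
    by (simp add: sum_negf[symmetric] Suc_diff_le)
  finally show ?case
    using sum_binomial_Suc[of k "\<lambda>j. symp_form N (p (Suc k - j)) z * symp_form N w (p j)"]
    unfolding p_def by simp
qed


lemma irreducible_action_invariant_eq_carrier:
  assumes "irreducible_action n L" and "vec_subspace n W"
    and "\<And>X w. X \<in> L \<Longrightarrow> w \<in> W \<Longrightarrow> X *\<^sub>v w \<in> W" and "w \<in> W" "w \<noteq> 0\<^sub>v n"
  shows "W = carrier_vec n"
  using assms unfolding irreducible_action_def by blast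

lemma vec_subspace_preimage:
  assumes L: "mat_subspace m L"
    and add: "\<And>i x y. i \<in> I \<Longrightarrow> x \<in> carrier_vec n \<Longrightarrow> y \<in> carrier_vec n \<Longrightarrow> f i (x + y) = f i x + f i y"
    and smult: "\<And>i c x. i \<in> I \<Longrightarrow> x \<in> carrier_vec n \<Longrightarrow> f i (c \<cdot>\<^sub>v x) = c \<cdot>\<^sub>m f i x"
    and zero: "\<And>i. i \<in> I \<Longrightarrow> f i (0\<^sub>v n) = 0\<^sub>m m m"
  shows "vec_subspace n {x \<in> carrier_vec n. \<forall>i\<in>I. f i x \<in> L}"
  using L unfolding vec_subspace_def mat_subspace_def by (auto simp: add smult zero)


locale sp_subalgebra =
  fixes N :: nat and L :: "complex mat set"
  assumes lie_subalgebra: "lie_subalgebra (2*N) L" and subset_sp: "L \<subseteq> sp N"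
begin

lemma mat_subspace: "mat_subspace (2*N) L"
  using lie_subalgebra unfolding lie_subalgebra_def by simp

lemma mem_sp: "X \<in> L \<Longrightarrow> X \<in> sp N"
  using subset_sp by blast

lemma mem_carrier: "X \<in> L \<Longrightarrow> X \<in> carrier_mat (2*N) (2*N)"
  using mat_subspace unfolding mat_subspace_def by blast

lemma zero_mem: "0\<^sub>m (2*N) (2*N) \<in> L"
  using mat_subspace unfolding mat_subspace_def by blast

lemma add_mem: "X \<in> L \<Longrightarrow> Y \<in> L \<Longrightarrow> X + Y \<in> L"
  using mat_subspace unfolding mat_subspace_def by blast

lemma smult_mem: "X \<in> L \<Longrightarrow> c \<cdot>\<^sub>m X \<in> L"
  using mat_subspace unfolding mat_subspace_def by blast

lemma bracket_mem: "X \<in> L \<Longrightarrow> Y \<in> L \<Longrightarrow> lie_bracket X Y \<in> L"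
  using lie_subalgebra unfolding lie_subalgebra_def by blast

lemma smult_mem_cancel:
  assumes "c \<cdot>\<^sub>m X \<in> L" "c \<noteq> 0" "X \<in> carrier_mat (2*N) (2*N)"
  shows "X \<in> L"
proof -
  have "(1/c) \<cdot>\<^sub>m (c \<cdot>\<^sub>m X) = X" using assms(2,3) by (intro eq_matI) auto
  then show ?thesis using smult_mem[OF assms(1), of "1/c"] by (simp only:)
qed

lemma add_mem_cancel:
  assumes "X + Y \<in> L" "X \<in> L" "Y \<in> carrier_mat (2*N) (2*N)"
  shows "Y \<in> L"
proof -
  have "(X + Y) + (-1) \<cdot>\<^sub>m X = Y" using assms(3) mem_carrier[OF assms(2)] by (intro eq_matI) auto
  then show ?thesis using add_mem[OF assms(1) smult_mem[OF assms(2)], of "-1"] by (simp only:)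
qed

lemma sym_prod_self_mem: "sym_sq N u \<in> L \<Longrightarrow> sym_prod N u u \<in> L"
  by (simp add: sym_prod_self smult_mem)

lemma sym_prod_lincomb_mem:
  assumes a: "a \<in> carrier_vec (2*N)"
    and y: "y\<^sub>1 \<in> carrier_vec (2*N)" "y\<^sub>2 \<in> carrier_vec (2*N)" "y\<^sub>3 \<in> carrier_vec (2*N)"
    and mem: "sym_prod N a y\<^sub>1 \<in> L" "sym_prod N a y\<^sub>2 \<in> L" "sym_prod N a y\<^sub>3 \<in> L"
  shows "sym_prod N a (c\<^sub>1 \<cdot>\<^sub>v y\<^sub>1 + c\<^sub>2 \<cdot>\<^sub>v y\<^sub>2 + y\<^sub>3) \<in> L"
proof -
  have "sym_prod N a (c\<^sub>1 \<cdot>\<^sub>v y\<^sub>1 + c\<^sub>2 \<cdot>\<^sub>v y\<^sub>2 + y\<^sub>3)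
      = c\<^sub>1 \<cdot>\<^sub>m sym_prod N a y\<^sub>1 + c\<^sub>2 \<cdot>\<^sub>m sym_prod N a y\<^sub>2 + sym_prod N a y\<^sub>3"
    using a y by (simp add: sym_prod_add_right sym_prod_smult_right assoc_add_mat[of _ "2*N" "2*N"])
  then show ?thesis using mem by (simp add: add_mem smult_mem)
qed

lemma sym_prod_mult_vec_mem:
  assumes X: "X \<in> L" and x: "x \<in> carrier_vec (2*N)" and y: "y \<in> carrier_vec (2*N)"
    and mem: "sym_prod N x y \<in> L" "sym_prod N (X *\<^sub>v x) y \<in> L"
  shows "sym_prod N x (X *\<^sub>v y) \<in> L"
proof -
  have "sym_prod N (X *\<^sub>v x) y + sym_prod N x (X *\<^sub>v y) \<in> L"
    using bracket_mem[OF X mem(1)] lie_bracket_sym_prod[OF mem_sp[OF X] x y] by simp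
  then show ?thesis
    by (rule add_mem_cancel[OF _ mem(2)]) simp
qed

lemma sym_prod_mult_vec_self_mem:
  assumes X: "X \<in> L" and x: "x \<in> carrier_vec (2*N)" and Ax: "sym_sq N x \<in> L"
  shows "sym_prod N x (X *\<^sub>v x) \<in> L"
proof -
  have "sym_prod N (X *\<^sub>v x) x \<in> L"
    using bracket_mem[OF X Ax] unfolding lie_bracket_sym_sq[OF mem_sp[OF X] x] .
  then show ?thesis by (subst sym_prod_comm)
qed

text \<open>Modulo \<open>L\<close>, the bracket identity leaves \<open>-3c\<close> times the product of \<open>X\<^sup>2u\<close> and \<open>u\<close>, where
  \<open>c = \<omega>(u, Xu) \<noteq> 0\<close>; so that product lies in \<open>L\<close>, and with it \<open>(Xu)\<cdot>(Xu)\<close>.\<close>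

lemma sym_sq_mult_vec_mem:
  assumes u: "u \<in> carrier_vec (2*N)" and Au: "sym_sq N u \<in> L" and X: "X \<in> L"
    and c0: "symp_form N u (X *\<^sub>v u) \<noteq> 0"
  shows "sym_sq N (X *\<^sub>v u) \<in> L"
proof -
  define x where "x = X *\<^sub>v u"
  define z where "z = X *\<^sub>v x"
  define c where "c = symp_form N u x"
  have XC: "X \<in> carrier_mat (2*N) (2*N)" using mem_carrier[OF X] .
  have x: "x \<in> carrier_vec (2*N)" and z: "z \<in> carrier_vec (2*N)"
    unfolding x_def z_def using XC u by auto
  have Y: "sym_prod N x u \<in> L"
    using bracket_mem[OF X Au] lie_bracket_sym_sq[OF mem_sp[OF X] u] unfolding x_def by simp
  have Z: "sym_prod N z u + sym_prod N x x \<in> L"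
    using bracket_mem[OF X Y] lie_bracket_sym_prod[OF mem_sp[OF X] x u] by (simp add: z_def x_def[symmetric])
  have key: "lie_bracket (sym_prod N x u) (sym_prod N z u + sym_prod N x x)
      + ((-2*c) \<cdot>\<^sub>m (sym_prod N z u + sym_prod N x x)
      + ((- symp_form N u z) \<cdot>\<^sub>m sym_prod N x u + (- symp_form N x z) \<cdot>\<^sub>m sym_prod N u u))
      = (-3*c) \<cdot>\<^sub>m sym_prod N z u"
    unfolding c_def by (rule sym_prod_bracket_identity[OF u x z])
  have "(-3*c) \<cdot>\<^sub>m sym_prod N z u \<in> L"
    unfolding key[symmetric]
    by (intro add_mem smult_mem bracket_mem Y Z sym_prod_self_mem[OF Au])
  then have "sym_prod N z u \<in> L"
    using smult_mem_cancel c0 unfolding c_def x_def by simp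
  then have "sym_prod N x x \<in> L"
    using add_mem_cancel[OF Z] by simp
  moreover have "(1/2) \<cdot>\<^sub>m sym_prod N x x = sym_sq N x"
    unfolding sym_prod_self by (intro eq_matI) auto
  ultimately show ?thesis
    using smult_mem[of "sym_prod N x x" "1/2"] unfolding x_def by simp
qed

end


section \<open>Two rank-one elements in general position\<close>

locale hyperbolic_pair = sp_subalgebra +
  fixes u v :: "complex vec"
  assumes u: "u \<in> carrier_vec (2*N)" and v: "v \<in> carrier_vec (2*N)"
    and sym_sq_u: "sym_sq N u \<in> L" and sym_sq_v: "sym_sq N v \<in> L"
    and uv: "symp_form N u v = 1"
begin

lemma symp_form_v_u: "symp_form N v u = -1"
  using symp_form_swap[OF v u] uv by simp

lemma u_nonzero: "u \<noteq> 0\<^sub>v (2*N)"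
  using uv symp_form_zero_left[OF v] by auto

lemma sym_prod_u_v: "sym_prod N u v \<in> L"
proof -
  have "lie_bracket (sym_sq N u) (sym_sq N v) = 1 \<cdot>\<^sub>m sym_prod N u v"
    using lie_bracket_sym_sq_sym_sq[OF u v] uv by simp
  also have "\<dots> = sym_prod N u v" by (intro eq_matI) auto
  finally show ?thesis using bracket_mem[OF sym_sq_u sym_sq_v] by simp
qed

lemma sym_prod_v_u: "sym_prod N v u \<in> L"
  using sym_prod_u_v by (subst sym_prod_comm)

definition perp :: "complex vec \<Rightarrow> complex vec" where
  "perp y = (- symp_form N y v) \<cdot>\<^sub>v u + (- symp_form N u y) \<cdot>\<^sub>v v + y"

lemma perp_carrier: "y \<in> carrier_vec (2*N) \<Longrightarrow> perp y \<in> carrier_vec (2*N)"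
  unfolding perp_def using u v by simp

lemma symp_form_u_perp: "y \<in> carrier_vec (2*N) \<Longrightarrow> symp_form N u (perp y) = 0"
  unfolding perp_def using u v uv symp_form_self[OF u]
  by (simp add: symp_form_add_right symp_form_smult_right)

lemma symp_form_v_perp: "y \<in> carrier_vec (2*N) \<Longrightarrow> symp_form N v (perp y) = 0"
  unfolding perp_def using u v symp_form_v_u symp_form_self[OF v] symp_form_swap[of v N y]
  by (simp add: symp_form_add_right symp_form_smult_right)

lemma perp_decomposition:
  "y \<in> carrier_vec (2*N) \<Longrightarrow> y = symp_form N y v \<cdot>\<^sub>v u + symp_form N u y \<cdot>\<^sub>v v + perp y"
  unfolding perp_def using u v by (intro eq_vecI) auto

lemma sym_prod_perp_mem_iff:
  assumes a: "a \<in> carrier_vec (2*N)" and y: "y \<in> carrier_vec (2*N)"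
    and au: "sym_prod N a u \<in> L" and av: "sym_prod N a v \<in> L"
  shows "sym_prod N a (perp y) \<in> L \<longleftrightarrow> sym_prod N a y \<in> L"
proof
  assume "sym_prod N a (perp y) \<in> L"
  from sym_prod_lincomb_mem[OF a u v perp_carrier[OF y] au av this]
  show "sym_prod N a y \<in> L" by (subst perp_decomposition[OF y])
next
  assume "sym_prod N a y \<in> L"
  from sym_prod_lincomb_mem[OF a u v y au av this]
  show "sym_prod N a (perp y) \<in> L" unfolding perp_def .
qed

lemma sym_prod_u_mem_if_v_mem:
  assumes q: "q \<in> carrier_vec (2*N)" and uq: "symp_form N u q = 0" and "sym_prod N v q \<in> L"
  shows "sym_prod N u q \<in> L"
proof -
  have "lie_bracket (sym_sq N u) (sym_prod N v q) = sym_prod N u q"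
    using lie_bracket_sym_prod[OF mem_sp[OF sym_sq_u] v q] u v q uq uv
    by (simp add: sym_sq_mult_vec sym_prod_zero_right)
  then show ?thesis using bracket_mem[OF sym_sq_u assms(3)] by simp
qed

lemma sym_prod_v_mem_if_u_mem:
  assumes w: "w \<in> carrier_vec (2*N)" and vw: "symp_form N v w = 0" and "sym_prod N u w \<in> L"
  shows "sym_prod N v w \<in> L"
proof -
  have "lie_bracket (sym_sq N v) (sym_prod N u w) = (-1) \<cdot>\<^sub>m sym_prod N v w"
    using lie_bracket_sym_prod[OF mem_sp[OF sym_sq_v] u w] u v w vw symp_form_v_u
    by (simp add: sym_sq_mult_vec sym_prod_zero_right sym_prod_smult_left)
  then show ?thesis
    using bracket_mem[OF sym_sq_v assms(3)] smult_mem_cancel[of "-1"] by simp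
qed

lemma sym_prod_mem_if_perp:
  assumes p: "p \<in> carrier_vec (2*N)" and w: "w \<in> carrier_vec (2*N)"
    and pv: "symp_form N p v = 0" and uw: "symp_form N u w = 0"
    and up: "sym_prod N u p \<in> L" and vw: "sym_prod N v w \<in> L"
  shows "sym_prod N p w \<in> L"
proof -
  have "sym_prod N u p *\<^sub>v v = p" and "sym_prod N u p *\<^sub>v w = symp_form N p w \<cdot>\<^sub>v u"
    using u v p w pv uv uw by (simp_all add: sym_prod_mult_vec)
  then have "lie_bracket (sym_prod N u p) (sym_prod N v w) = sym_prod N p w + symp_form N p w \<cdot>\<^sub>m sym_prod N v u"
    using lie_bracket_sym_prod[OF mem_sp[OF up] v w] u v by (simp add: sym_prod_smult_right)
  then have "sym_prod N p w + symp_form N p w \<cdot>\<^sub>m sym_prod N v u \<in> L"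
    using bracket_mem[OF up vw] by simp
  then have "symp_form N p w \<cdot>\<^sub>m sym_prod N v u + sym_prod N p w \<in> L"
    using comm_add_mat[of "sym_prod N p w" "2*N" "2*N" "symp_form N p w \<cdot>\<^sub>m sym_prod N v u"] by simp
  then show ?thesis
    by (rule add_mem_cancel[OF _ smult_mem[OF sym_prod_v_u]]) simp
qed

lemma sym_prod_u_mult_vec_v_mem:
  assumes X: "X \<in> L"
  shows "sym_prod N u (X *\<^sub>v v) \<in> L"
proof -
  have Xv: "X *\<^sub>v v \<in> carrier_vec (2*N)" using mem_carrier[OF X] v by simp
  have "sym_prod N v (perp (X *\<^sub>v v)) \<in> L"
    using sym_prod_perp_mem_iff[OF v Xv sym_prod_v_u] sym_prod_self_mem[OF sym_sq_v]
      sym_prod_mult_vec_self_mem[OF X v sym_sq_v] by simp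
  then have "sym_prod N u (perp (X *\<^sub>v v)) \<in> L"
    using sym_prod_u_mem_if_v_mem perp_carrier[OF Xv] symp_form_u_perp[OF Xv] by simp
  then show ?thesis
    using sym_prod_perp_mem_iff[OF u Xv sym_prod_self_mem[OF sym_sq_u] sym_prod_u_v] by simp
qed

lemma sym_prod_u_mult_vec_perp_mem:
  assumes X: "X \<in> L" and w: "w \<in> carrier_vec (2*N)"
    and uw: "symp_form N u w = 0" and vw: "symp_form N v w = 0" and Bw: "sym_prod N u w \<in> L"
  shows "sym_prod N u (X *\<^sub>v w) \<in> L"
proof -
  have Xu: "X *\<^sub>v u \<in> carrier_vec (2*N)" using mem_carrier[OF X] u by simp
  define p where "p = perp (X *\<^sub>v u)"
  have p: "p \<in> carrier_vec (2*N)" unfolding p_def using perp_carrier[OF Xu] .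
  have pv: "symp_form N p v = 0"
    using symp_form_v_perp[OF Xu] symp_form_swap[OF p v] unfolding p_def by simp
  have up: "sym_prod N u p \<in> L"
    unfolding p_def using sym_prod_perp_mem_iff[OF u Xu sym_prod_self_mem[OF sym_sq_u] sym_prod_u_v]
      sym_prod_mult_vec_self_mem[OF X u sym_sq_u] by simp
  have Bvw: "sym_prod N v w \<in> L" using sym_prod_v_mem_if_u_mem[OF w vw Bw] .
  have wu: "sym_prod N w u \<in> L" using Bw by (subst sym_prod_comm)
  have wv: "sym_prod N w v \<in> L" using Bvw by (subst sym_prod_comm)
  have "sym_prod N w p \<in> L"
    using sym_prod_mem_if_perp[OF p w pv uw up Bvw] by (subst sym_prod_comm)
  then have "sym_prod N w (X *\<^sub>v u) \<in> L"
    using sym_prod_perp_mem_iff[OF w Xu wu wv] unfolding p_def by simp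
  then have "sym_prod N (X *\<^sub>v u) w \<in> L"
    by (subst sym_prod_comm)
  then show ?thesis
    using sym_prod_mult_vec_mem[OF X u w Bw] by simp
qed

lemma sym_prod_u_mult_vec_mem:
  assumes X: "X \<in> L" and x: "x \<in> carrier_vec (2*N)" and Bx: "sym_prod N u x \<in> L"
  shows "sym_prod N u (X *\<^sub>v x) \<in> L"
proof -
  have XC: "X \<in> carrier_mat (2*N) (2*N)" using mem_carrier[OF X] .
  define w where "w = perp x"
  have w: "w \<in> carrier_vec (2*N)" unfolding w_def using perp_carrier[OF x] .
  have Bw: "sym_prod N u w \<in> L"
    unfolding w_def using sym_prod_perp_mem_iff[OF u x sym_prod_self_mem[OF sym_sq_u] sym_prod_u_v] Bx
    by simp
  have Bxw: "sym_prod N u (X *\<^sub>v w) \<in> L"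
    using sym_prod_u_mult_vec_perp_mem[OF X w _ _ Bw] symp_form_u_perp[OF x] symp_form_v_perp[OF x]
    unfolding w_def by simp
  have "X *\<^sub>v x = X *\<^sub>v (symp_form N x v \<cdot>\<^sub>v u + symp_form N u x \<cdot>\<^sub>v v + w)"
    using perp_decomposition[OF x] unfolding w_def by simp
  also have "\<dots> = symp_form N x v \<cdot>\<^sub>v (X *\<^sub>v u) + symp_form N u x \<cdot>\<^sub>v (X *\<^sub>v v) + X *\<^sub>v w"
    using XC u v w
    by (simp add: mult_add_distrib_mat_vec[of X "2*N" "2*N"] mult_mat_vec[of X "2*N" "2*N"]
        assoc_add_vec[of _ "2*N"])
  finally show ?thesis
    using sym_prod_lincomb_mem[OF u _ _ _ sym_prod_mult_vec_self_mem[OF X u sym_sq_u]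
        sym_prod_u_mult_vec_v_mem[OF X] Bxw] XC u v w by simp
qed

lemma sym_prod_u_mem:
  assumes irr: "irreducible_action (2*N) L" and x: "x \<in> carrier_vec (2*N)"
  shows "sym_prod N u x \<in> L"
proof -
  define K where "K = {x \<in> carrier_vec (2*N). \<forall>i\<in>{u}. sym_prod N i x \<in> L}"
  have "vec_subspace (2*N) K"
    unfolding K_def using mat_subspace u
    by (intro vec_subspace_preimage) (auto simp: sym_prod_add_right sym_prod_smult_right sym_prod_zero_right)
  moreover have "X *\<^sub>v y \<in> K" if X: "X \<in> L" and y: "y \<in> K" for X y
    using sym_prod_u_mult_vec_mem[OF X] y mem_carrier[OF X] unfolding K_def by simp
  moreover have "u \<in> K" unfolding K_def using u sym_prod_self_mem[OF sym_sq_u] by simp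
  ultimately have "K = carrier_vec (2*N)"
    by (rule irreducible_action_invariant_eq_carrier[OF irr _ _ _ u_nonzero])
  then show ?thesis using x unfolding K_def by auto
qed

lemma sym_prod_mem:
  assumes irr: "irreducible_action (2*N) L"
    and x: "x \<in> carrier_vec (2*N)" and y: "y \<in> carrier_vec (2*N)"
  shows "sym_prod N x y \<in> L"
proof -
  define E where "E = {y \<in> carrier_vec (2*N). \<forall>x\<in>carrier_vec (2*N). sym_prod N x y \<in> L}"
  have "vec_subspace (2*N) E"
    unfolding E_def using mat_subspace
    by (intro vec_subspace_preimage) (auto simp: sym_prod_add_right sym_prod_smult_right sym_prod_zero_right)
  moreover have "X *\<^sub>v y \<in> E" if X: "X \<in> L" and y: "y \<in> E" for X y
    using sym_prod_mult_vec_mem[OF X] y mem_carrier[OF X] unfolding E_def by simp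
  moreover have "u \<in> E"
    unfolding E_def using u sym_prod_u_mem[OF irr] by (subst sym_prod_comm) simp
  ultimately have "E = carrier_vec (2*N)"
    by (rule irreducible_action_invariant_eq_carrier[OF irr _ _ _ u_nonzero])
  then show ?thesis using x y unfolding E_def by auto
qed

lemma sp_subset:
  assumes "irreducible_action (2*N) L"
  shows "sp N \<subseteq> L"
  using sp_subset_if_sym_prods_mem[OF mat_subspace] sym_prod_mem[OF assms] by blast

end


section \<open>A rank-one element with isotropic orbit\<close>

context sp_subalgebra
begin

lemma bracket_funpow_mem: "X \<in> L \<Longrightarrow> M \<in> L \<Longrightarrow> (lie_bracket X ^^ k) M \<in> L"
  by (induction k) (auto intro: bracket_mem)

lemma word_act_mem_carrier: "set P \<subseteq> L \<Longrightarrow> x \<in> carrier_vec (2*N) \<Longrightarrow> word_act P x \<in> carrier_vec (2*N)"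
  using mem_carrier by (intro word_act_carrier) auto

text \<open>In the expansion of \<open>\<omega>(u, ad\<^sub>X\<^sup>2\<^sup>n(sym_sq N u) u)\<close> only the middle term survives, and it is
  a nonzero multiple of \<open>\<omega>(u, X\<^sup>n u)\<^sup>2\<close>.\<close>

lemma symp_form_power_vanishes:
  assumes u: "u \<in> carrier_vec (2*N)" and Au: "sym_sq N u \<in> L"
    and isotropic: "\<And>Y. Y \<in> L \<Longrightarrow> symp_form N u (Y *\<^sub>v u) = 0" and X: "X \<in> L"
  shows "symp_form N u (word_act (replicate n X) u) = 0"
proof (induction n rule: less_induct)
  case (less n)
  define p where "p i = word_act (replicate i X) u" for i
  have p: "p i \<in> carrier_vec (2*N)" for i
    unfolding p_def using X u by (intro word_act_mem_carrier) auto
  have smaller: "symp_form N u (p i) = 0" "symp_form N (p i) u = 0" if "i < n" for i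
    using less[OF that] symp_form_swap[OF p u, of i] unfolding p_def by simp_all
  have "0 = symp_form N u ((lie_bracket X ^^ (2*n)) (sym_sq N u) *\<^sub>v u)"
    using isotropic[OF bracket_funpow_mem[OF X Au]] by simp
  also have "\<dots> = (\<Sum>j\<le>2*n. of_nat (2*n choose j) * (symp_form N (p (2*n - j)) u * symp_form N u (p j)))"
    unfolding p_def using symp_form_lie_bracket_funpow_sym_sq[OF mem_sp[OF X] u u u] .
  also have "\<dots> = (\<Sum>j\<le>2*n. if j = n then of_nat (2*n choose n) * (symp_form N (p n) u * symp_form N u (p n)) else 0)"
  proof (intro sum.cong refl)
    fix j assume "j \<in> {..2*n}"
    then consider "j < n" | "j = n" | "2*n - j < n" by fastforce
    then show "of_nat (2*n choose j) * (symp_form N (p (2*n - j)) u * symp_form N u (p j)) =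
      (if j = n then of_nat (2*n choose n) * (symp_form N (p n) u * symp_form N u (p n)) else 0)"
      by cases (auto simp: smaller)
  qed
  also have "\<dots> = - of_nat (2*n choose n) * symp_form N u (p n) ^ 2"
    using symp_form_swap[OF p u, of n] by (simp add: power2_eq_square)
  finally show ?case
    unfolding p_def by simp
qed

lemma isotropic_word_form_symmetric_multilinear:
  assumes u: "u \<in> carrier_vec (2*N)"
    and shorter: "\<And>P. set P \<subseteq> L \<Longrightarrow> length P < n \<Longrightarrow> symp_form N u (word_act P u) = 0"
  shows "symmetric_multilinear (\<lambda>P. symp_form N u (word_act P u)) L n (\<cdot>\<^sub>m)"
proof
  have swap: "symp_form N u (word_act (A @ X # Y # B) u) = symp_form N u (word_act (A @ Y # X # B) u)"
    if "set (A @ X # Y # B) \<subseteq> L" "length (A @ X # Y # B) = n" for A X Y B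
  proof -
    have A: "set A \<subseteq> L" and B: "set B \<subseteq> L" and X: "X \<in> L" and Y: "Y \<in> L" using that(1) by auto
    have AC: "set A \<subseteq> carrier_mat (2*N) (2*N)" "set B \<subseteq> carrier_mat (2*N) (2*N)"
      using A B mem_carrier by auto
    have zero: "symp_form N u (word_act (A @ lie_bracket X Y # B) u) = 0"
      using shorter[of "A @ lie_bracket X Y # B"] A B bracket_mem[OF X Y] that(2) by auto
    have "word_act (A @ Y # X # B) u \<in> carrier_vec (2*N)"
      and "word_act (A @ lie_bracket X Y # B) u \<in> carrier_vec (2*N)"
      by (rule word_act_mem_carrier; use A B X Y bracket_mem[OF X Y] u in simp)+
    then show ?thesis
      unfolding word_act_swap[OF AC mem_carrier[OF X] mem_carrier[OF Y] u]
      by (subst symp_form_add_right) (use u zero in simp_all)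
  qed
  show "symp_form N u (word_act P u) = symp_form N u (word_act Q u)"
    if "set P \<subseteq> L" "length P = n" "mset P = mset Q" for P Q
    using swap_invariant_imp_perm_invariant[where f = "\<lambda>P. symp_form N u (word_act P u)"
        and S = L and n = n and A = "[]", OF swap] that by simp
  show "symp_form N u (word_act ((X + Y) # P) u) = symp_form N u (word_act (X # P) u) + symp_form N u (word_act (Y # P) u)"
    if "X \<in> L" "Y \<in> L" "set P \<subseteq> L" for X Y P
    using that u mem_carrier word_act_mem_carrier[OF that(3) u]
      mult_mat_vec_carrier[OF mem_carrier[OF that(1)] word_act_mem_carrier[OF that(3) u]]
      mult_mat_vec_carrier[OF mem_carrier[OF that(2)] word_act_mem_carrier[OF that(3) u]]
    by (simp add: add_mult_distrib_mat_vec[of _ "2*N" "2*N"] symp_form_add_right)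
  show "symp_form N u (word_act ((c \<cdot>\<^sub>m X) # P) u) = c * symp_form N u (word_act (X # P) u)"
    if "X \<in> L" "set P \<subseteq> L" for X c P
    using that u mem_carrier word_act_mem_carrier[OF that(2) u]
      mult_mat_vec_carrier[OF mem_carrier[OF that(1)] word_act_mem_carrier[OF that(2) u]]
    by (simp add: smult_mat_mult_vec[of _ "2*N" "2*N"] symp_form_smult_right)
qed (auto intro: add_mem smult_mem)

lemma symp_form_word_act_vanishes:
  assumes u: "u \<in> carrier_vec (2*N)" and Au: "sym_sq N u \<in> L"
    and isotropic: "\<And>Y. Y \<in> L \<Longrightarrow> symp_form N u (Y *\<^sub>v u) = 0"
  shows "set P \<subseteq> L \<Longrightarrow> symp_form N u (word_act P u) = 0"
proof (induction "length P" arbitrary: P rule: less_induct)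
  case less
  interpret symmetric_multilinear "\<lambda>P. symp_form N u (word_act P u)" L "length P" "(\<cdot>\<^sub>m)"
    using isotropic_word_form_symmetric_multilinear[OF u] less.hyps by blast
  show ?case
    using vanishes_if_diagonal_vanishes symp_form_power_vanishes[OF u Au isotropic] zero_mem less.prems
    by blast
qed

definition word_orth :: "complex vec \<Rightarrow> complex vec set" where
  "word_orth u = {x \<in> carrier_vec (2*N). \<forall>P. set P \<subseteq> L \<longrightarrow> symp_form N u (word_act P x) = 0}"

lemma word_orth_subspace:
  assumes u: "u \<in> carrier_vec (2*N)"
  shows "vec_subspace (2*N) (word_orth u)"
  unfolding vec_subspace_def
proof (intro conjI ballI allI)
  have PC: "set P \<subseteq> carrier_mat (2*N) (2*N)" if "set P \<subseteq> L" for P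
    using that mem_carrier by auto
  show "word_orth u \<subseteq> carrier_vec (2*N)" unfolding word_orth_def by blast
  show "0\<^sub>v (2*N) \<in> word_orth u"
    unfolding word_orth_def using u PC by (simp add: word_act_zero symp_form_zero_right)
  fix c x y assume x: "x \<in> word_orth u" and y: "y \<in> word_orth u"
  have "symp_form N u (word_act P (x + y)) = 0" if P: "set P \<subseteq> L" for P
    using x y P PC[OF P] word_act_mem_carrier[OF P] u unfolding word_orth_def
    by (simp add: word_act_add symp_form_add_right)
  then show "x + y \<in> word_orth u" using x y unfolding word_orth_def by simp
  have "symp_form N u (word_act P (c \<cdot>\<^sub>v x)) = 0" if P: "set P \<subseteq> L" for P
    using x P PC[OF P] word_act_mem_carrier[OF P] u unfolding word_orth_def
    by (simp add: word_act_smult symp_form_smult_right)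
  then show "c \<cdot>\<^sub>v x \<in> word_orth u" using x unfolding word_orth_def by simp
qed

lemma word_orth_invariant:
  assumes X: "X \<in> L" and x: "x \<in> word_orth u"
  shows "X *\<^sub>v x \<in> word_orth u"
proof -
  have x_words: "\<forall>Q. set Q \<subseteq> L \<longrightarrow> symp_form N u (word_act Q x) = 0"
    using x unfolding word_orth_def by blast
  have "symp_form N u (word_act P (X *\<^sub>v x)) = 0" if "set P \<subseteq> L" for P
    using x_words[rule_format, of "P @ [X]"] that X by simp
  then show ?thesis using x mem_carrier[OF X] unfolding word_orth_def by simp
qed

lemma not_irreducible_if_isotropic:
  assumes irr: "irreducible_action (2*N) L"
    and u: "u \<in> carrier_vec (2*N)" "u \<noteq> 0\<^sub>v (2*N)" and Au: "sym_sq N u \<in> L"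
    and isotropic: "\<And>Y. Y \<in> L \<Longrightarrow> symp_form N u (Y *\<^sub>v u) = 0"
  shows False
proof -
  have "u \<in> word_orth u"
    unfolding word_orth_def using u symp_form_word_act_vanishes[OF u(1) Au isotropic] by simp
  then have W: "word_orth u = carrier_vec (2*N)"
    using irreducible_action_invariant_eq_carrier[OF irr word_orth_subspace[OF u(1)] word_orth_invariant]
      u(2) by blast
  have "symp_form N u y = 0" if "y \<in> carrier_vec (2*N)" for y
  proof -
    have "\<forall>P. set P \<subseteq> L \<longrightarrow> symp_form N u (word_act P y) = 0"
      using that W unfolding word_orth_def by blast
    then show ?thesis by (metis empty_subsetI list.set(1) word_act_simps(1))
  qed
  then show False
    using symp_form_nondegenerate[OF u(1)] u(2) by blast
qed

theorem eq_sp_if_irreducible_rank_one: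
  assumes irr: "irreducible_action (2*N) L" and A: "A \<in> L" and rank: "vec_space.rank (2*N) A = 1"
  shows "L = sp N"
proof -
  obtain u where u: "u \<in> carrier_vec (2*N)" "u \<noteq> 0\<^sub>v (2*N)" and Au: "sym_sq N u \<in> L"
    using sp_rank_one_eq_sym_sq[OF mem_sp[OF A] rank] A by metis
  consider X where "X \<in> L" "symp_form N u (X *\<^sub>v u) \<noteq> 0" | "\<And>X. X \<in> L \<Longrightarrow> symp_form N u (X *\<^sub>v u) = 0"
    by blast
  then show ?thesis
  proof cases
    case 1
    define c where "c = symp_form N u (X *\<^sub>v u)"
    define v where "v = (1/c) \<cdot>\<^sub>v (X *\<^sub>v u)"
    have Xu: "X *\<^sub>v u \<in> carrier_vec (2*N)" using mem_carrier[OF 1(1)] u(1) by simp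
    have "hyperbolic_pair N L u v"
    proof
      show "v \<in> carrier_vec (2*N)" unfolding v_def using Xu by simp
      show "sym_sq N v \<in> L"
        unfolding v_def using sym_sq_smult[OF Xu] smult_mem sym_sq_mult_vec_mem[OF u(1) Au 1] by simp
      show "symp_form N u v = 1"
        unfolding v_def c_def using symp_form_smult_right[OF Xu u(1)] 1(2) by simp
    qed (use lie_subalgebra subset_sp u Au in auto)
    then show ?thesis
      using hyperbolic_pair.sp_subset[OF _ irr] subset_sp by blast
  next
    case 2
    then show ?thesis using not_irreducible_if_isotropic[OF irr u Au] by blast
  qed
qed

end

theorem theorem3p3:
  shows "\<exists>g0::nat. \<forall>g::nat. \<forall>L::complex mat set. \<forall>A::complex mat.
     g \<ge> g0 \<and>
     semisimple_lie (4*g-4) L \<and>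
     diag_emb (g-5) (2*g-2) ` sp (g-5) \<subseteq> L \<and>
     L \<subseteq> sp (2*g-2) \<and>
     irreducible_action (4*g-4) L \<and>
     A \<in> L \<and> nilpotent_mat (4*g-4) A \<and> vec_space.rank (4*g-4) A = 1
     \<longrightarrow> L = sp (2*g-2)"
proof (intro exI[of _ 0] allI impI)
  fix g :: nat and L :: "complex mat set" and A :: "complex mat"
  assume hyps: "0 \<le> g \<and> semisimple_lie (4*g-4) L \<and> diag_emb (g-5) (2*g-2) ` sp (g-5) \<subseteq> L \<and>
     L \<subseteq> sp (2*g-2) \<and> irreducible_action (4*g-4) L \<and>
     A \<in> L \<and> nilpotent_mat (4*g-4) A \<and> vec_space.rank (4*g-4) A = 1"
  have dim: "4*g-4 = 2*(2*g-2)" by simp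
  interpret sp_subalgebra "2*g-2" L
    using hyps unfolding dim semisimple_lie_def by unfold_locales auto
  show "L = sp (2*g-2)"
    using eq_sp_if_irreducible_rank_one hyps unfolding dim by blast
qed

end
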